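(* Let $n \geq 1$. The triple $(\mathcal{G}([n]), \mathbf{g}_{[n]}, (\gamma_1, \dots, \gamma_n))$ is an $n$-expansion group, and the unique homomorphism of $n$-expansion groups $\mathcal{C}([n]) \to \mathcal{G}([n])$ sending $x_i \mapsto \gamma_i$ is an isomorphism. Every $n$-expansion group $(G, \phi, (g_1, \dots, g_n))$ admits a unique epimorphism of $n$-expansion groups $(\mathcal{G}([n]), \mathbf{g}_{[n]}, (\gamma_1, \dots, \gamma_n)) \twoheadrightarrow (G, \phi, (g_1, \dots, g_n))$. In particular $\#G \leq 2^{n 2^{n-1} - 2^n + n + 1}$, with equality if and only if this epimorphism is an isomorphism.
   Context: $V_{[n]} = \mathbb{F}_2^n$ with standard basis $e_1,\dots,e_n$. An $n$-expansion group is a triple $(G, \phi, (g_1,\dots,g_n))$ where $G$ is a group, $\phi: G \to V_{[n]}$ is a homomorphism, $g_i \in G$ with $\phi(g_i) = e_i$ and $g_i^2 = 1$ for all $i$, $\ker\phi$ is an elementary abelian $2$-group, and $[G,G] = \ker \phi$. A homomorphism of $n$-expansion groups $(G,\phi,(g_i)) \to (G',\phi',(g_i'))$ is a group homomorphism $f$ with $f(g_i) = g_i'$ for all $i$. For $i \in [n]$, let $U_i$ be the $\mathbb{F}_2$-vector space with basis $\{e_A : A \subseteq [n], i \in A\}$, with $\mathbb{F}_2^{[n]\setminus\{i\}}$ acting linearly by $e_j \cdot e_A = e_A + e_{A \cup \{j\}}$ if $j \notin A$ and $e_j \cdot e_A = e_A$ if $j \in A$. Let $G_i([n]) = U_i \rtimes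 \mathbb{F}_2^{[n]\setminus\{i\}}$, let $g_{i,j} = (0, e_j)$ for $j \neq i$ and $g_{i,i} = (e_{\{i\}}, 0)$, and let $\phi_i: G_i([n]) \to V_{[n]}$ be the homomorphism $(u, w) \mapsto w + c(u) e_i$, where $c(u)$ is the coefficient of $e_{\{i\}}$ in $u$ (so $\phi_i(g_{i,j}) = e_j$). Let $\mathcal{G}([n])$ be the subgroup of $\prod_{i \in [n]} G_i([n])$ generated by $\gamma_j = (g_{1,j}, \dots, g_{n,j})$, $j \in [n]$, and $\mathbf{g}_{[n]}: \mathcal{G}([n]) \to V_{[n]}$ the restriction of $(\phi_1,\dots,\phi_n) \mapsto$ common value (i.e. $\mathbf{g}_{[n]}(\gamma_j) = e_j$). Let $F_{[n]}$ be the free group on $x_1,\dots,x_n$, $\widetilde{N}$ the smallest normal subgroup containing all squares of elements of $[F_{[n]},F_{[n]}]$ and $x_1^2,\dots,x_n^2$, $\mathcal{C}([n]) = F_{[n]}/\widetilde{N}$, viewed as an $n$-expansion group with generators the images of $x_i$ and the map to $V_{[n]}$ induced by $x_i \mapsto e_i$. *)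

theory Defs
  imports "HOL-Algebra.Algebra"
begin

section \<open>The group V_[n] = F_2^n, elements are subsets of {1..n} (e_i = {i})\<close>

definition symdiff :: "'a set \<Rightarrow> 'a set \<Rightarrow> 'a set" where
  "symdiff A B = (A - B) \<union> (B - A)"

definition Vn :: "nat \<Rightarrow> nat set monoid" where
  "Vn n = \<lparr>carrier = Pow {1..n}, monoid.mult = symdiff, one = {}\<rparr>"

definition expansion_group ::
  "nat \<Rightarrow> ('a, 'b) monoid_scheme \<Rightarrow> ('a \<Rightarrow> nat set) \<Rightarrow> (nat \<Rightarrow> 'a) \<Rightarrow> bool" where
  "expansion_group n G \<phi> g \<longleftrightarrow>
     group G \<and> \<phi> \<in> hom G (Vn n) \<and>
     (\<forall>i\<in>{1..n}. g i \<in> carrier G \<and> \<phi> (g i) = {i} \<and> g i \<otimes>\<^bsub>G\<^esub> g i = \<one>\<^bsub>G\<^esub>) \<and>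
     (\<forall>x\<in>kernel G (Vn n) \<phi>. \<forall>y\<in>kernel G (Vn n) \<phi>. x \<otimes>\<^bsub>G\<^esub> y = y \<otimes>\<^bsub>G\<^esub> x) \<and>
     (\<forall>x\<in>kernel G (Vn n) \<phi>. x \<otimes>\<^bsub>G\<^esub> x = \<one>\<^bsub>G\<^esub>) \<and>
     derived G (carrier G) = kernel G (Vn n) \<phi>"

definition expansion_hom ::
  "nat \<Rightarrow> ('a, 'b) monoid_scheme \<Rightarrow> (nat \<Rightarrow> 'a) \<Rightarrow> ('c, 'd) monoid_scheme \<Rightarrow> (nat \<Rightarrow> 'c)
     \<Rightarrow> ('a \<Rightarrow> 'c) \<Rightarrow> bool" where
  "expansion_hom n G g H h f \<longleftrightarrow> f \<in> hom G H \<and> (\<forall>i\<in>{1..n}. f (g i) = h i)"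

text \<open>An element of U_i is the set of those A (A \<subseteq> [n], i \<in> A) whose basis vector e_A
  has coefficient 1. An element of F_2^([n]-{i}) is a subset w of [n]-{i}.\<close>

definition Ucar :: "nat \<Rightarrow> nat \<Rightarrow> nat set set set" where
  "Ucar n i = Pow {A. A \<subseteq> {1..n} \<and> i \<in> A}"

text \<open>Linear action of the basis vector e_j: e_A \<mapsto> e_A + e_(A \<union> {j}) if j \<notin> A, e_A otherwise.\<close>
definition act_gen :: "nat \<Rightarrow> nat set set \<Rightarrow> nat set set" where
  "act_gen j u = symdiff u {insert j A | A. A \<in> u \<and> j \<notin> A}"

text \<open>Action of w = sum of e_j (j \<in> w): composition of the (commuting) generator actions.\<close>
definition act :: "nat set \<Rightarrow> nat set set \<Rightarrow> nat set set" where
  "act w u = Finite_Set.fold act_gen u w"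

definition Gi :: "nat \<Rightarrow> nat \<Rightarrow> (nat set set \<times> nat set) monoid" where
  "Gi n i = \<lparr>carrier = Ucar n i \<times> Pow ({1..n} - {i}),
             monoid.mult = (\<lambda>(u, w) (u', w'). (symdiff u (act w u'), symdiff w w')),
             one = ({}, {})\<rparr>"

definition gi :: "nat \<Rightarrow> nat \<Rightarrow> nat set set \<times> nat set" where
  "gi i j = (if j = i then ({{i}}, {}) else ({}, {j}))"

definition phii :: "nat \<Rightarrow> nat set set \<times> nat set \<Rightarrow> nat set" where
  "phii i x = symdiff (snd x) (if {i} \<in> fst x then {i} else {})"

definition ProdG :: "nat \<Rightarrow> (nat \<Rightarrow> nat set set \<times> nat set) monoid" where
  "ProdG n = product_group {1..n} (Gi n)"

definition gamma :: "nat \<Rightarrow> nat \<Rightarrow> (nat \<Rightarrow> nat set set \<times> nat set)" where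
  "gamma n j = (\<lambda>i\<in>{1..n}. gi i j)"

definition GG :: "nat \<Rightarrow> (nat \<Rightarrow> nat set set \<times> nat set) monoid" where
  "GG n = subgroup_generated (ProdG n) (gamma n ` {1..n})"

definition gbold :: "nat \<Rightarrow> (nat \<Rightarrow> nat set set \<times> nat set) \<Rightarrow> nat set" where
  "gbold n x = (THE v. \<forall>i\<in>{1..n}. phii i (x i) = v)"

text \<open>Letters: (False, a) is x_a, (True, a) is x_a^(-1). Elements: reduced words.\<close>

definition cancels :: "bool \<times> nat \<Rightarrow> bool \<times> nat \<Rightarrow> bool" where
  "cancels l m \<longleftrightarrow> snd l = snd m \<and> fst l \<noteq> fst m"

fun reduced :: "(bool \<times> nat) list \<Rightarrow> bool" where
  "reduced (l # m # ws) = (\<not> cancels l m \<and> reduced (m # ws))"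
| "reduced _ = True"

fun cons_red :: "bool \<times> nat \<Rightarrow> (bool \<times> nat) list \<Rightarrow> (bool \<times> nat) list" where
  "cons_red l [] = [l]"
| "cons_red l (m # ms) = (if cancels l m then ms else l # m # ms)"

definition FreeGrp :: "nat \<Rightarrow> (bool \<times> nat) list monoid" where
  "FreeGrp n = \<lparr>carrier = {w. reduced w \<and> snd ` set w \<subseteq> {1..n}},
                monoid.mult = (\<lambda>v w. foldr cons_red v w),
                one = []\<rparr>"

definition xgen :: "nat \<Rightarrow> (bool \<times> nat) list" where
  "xgen i = [(False, i)]"

definition normal_closure :: "('a, 'b) monoid_scheme \<Rightarrow> 'a set \<Rightarrow> 'a set" where
  "normal_closure G S =
     generate G {g \<otimes>\<^bsub>G\<^esub> s \<otimes>\<^bsub>G\<^esub> inv\<^bsub>G\<^esub> g | g s. g \<in> carrier G \<and> s \<in> S}"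

definition Ntilde :: "nat \<Rightarrow> (bool \<times> nat) list set" where
  "Ntilde n = normal_closure (FreeGrp n)
     ({h \<otimes>\<^bsub>FreeGrp n\<^esub> h | h. h \<in> derived (FreeGrp n) (carrier (FreeGrp n))}
      \<union> {xgen i \<otimes>\<^bsub>FreeGrp n\<^esub> xgen i | i. i \<in> {1..n}})"

definition CC :: "nat \<Rightarrow> (bool \<times> nat) list set monoid" where
  "CC n = FreeGrp n Mod Ntilde n"

definition cgen :: "nat \<Rightarrow> nat \<Rightarrow> (bool \<times> nat) list set" where
  "cgen n i = Ntilde n #>\<^bsub>FreeGrp n\<^esub> xgen i"

definition parity_map :: "(bool \<times> nat) list \<Rightarrow> nat set" where
  "parity_map w = {a. odd (length (filter (\<lambda>l. snd l = a) w))}"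

definition cphi :: "nat \<Rightarrow> (bool \<times> nat) list set \<Rightarrow> nat set" where
  "cphi n C = (THE v. \<exists>w\<in>C. parity_map w = v)"

definition bound_exp :: "nat \<Rightarrow> nat" where
  "bound_exp n = n * 2 ^ (n - 1) + n + 1 - 2 ^ n"

end

theory Submission
  imports Defs
begin

text \<open>
  In an \<open>n\<close>-expansion group \<open>G\<close> the kernel \<open>D = [G, G]\<close> is an \<open>\<bbbF>_2\<close>-vector space on which
  conjugation by an involution \<open>a\<close> acts linearly; put \<open>\<delta>_a = 1 + c_a\<close>. These operators commute,
  satisfy \<open>\<delta>_a \<delta>_a = 0\<close> and the Jacobi identity \<open>\<delta>_a [b, c] = \<delta>_b [a, c] + \<delta>_c [a, b]\<close>.
  Consequently the \<open>#J = n 2^(n-1) - 2^n + 1\<close> commuting involutions \<open>\<delta>_T [g_m, g_j]\<close>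
  (\<open>m < j\<close>, \<open>m < min T\<close>) span a subgroup normalised by every \<open>g_i\<close>, and adjoining
  \<open>g_1, \<dots>, g_n\<close> one at a time at most doubles its order each time. Since \<open>G = \<langle>g_i\<rangle> D\<close>, the
  nilpotency of the \<open>\<delta>\<close>'s shows that the \<open>g_i\<close> generate \<open>G\<close>; hence \<open>#G \<le> 2^(n + #J)\<close>.

  In \<open>\<G>([n])\<close> all coordinates are explicit, and the corresponding elements are visibly
  independent, so \<open>\<G>([n])\<close> is an expansion group attaining the bound. The free construction
  \<open>\<C>([n])\<close> is an expansion group mapping onto every expansion group, in particular onto
  \<open>\<G>([n])\<close>; comparing orders this map is an isomorphism, and composing its inverse with
  \<open>\<C>([n]) \<rightarrow> G\<close> gives the epimorphism \<open>\<G>([n]) \<rightarrow> G\<close>.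
\<close>

section \<open>Groups generated by involutions\<close>

lemma (in group) inv_involution: "x \<in> carrier G \<Longrightarrow> x \<otimes> x = \<one> \<Longrightarrow> inv x = x"
  by (rule inv_equality)

lemma (in group) mult_inv_cancel_left: "x \<in> carrier G \<Longrightarrow> y \<in> carrier G \<Longrightarrow> x \<otimes> (inv x \<otimes> y) = y"
  by (simp flip: m_assoc)

lemma (in group) inv_mult_cancel_left: "x \<in> carrier G \<Longrightarrow> y \<in> carrier G \<Longrightarrow> inv x \<otimes> (x \<otimes> y) = y"
  by (simp flip: m_assoc)

lemma (in group) exponent2_subgroup_comm:
  assumes D: "subgroup D G" and sq: "\<forall>z\<in>D. z \<otimes> z = \<one>" and x: "x \<in> D" and y: "y \<in> D"
  shows "x \<otimes> y = y \<otimes> x"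
proof -
  have xc: "x \<in> carrier G" and yc: "y \<in> carrier G"
    using subgroup.mem_carrier[OF D x] subgroup.mem_carrier[OF D y] .
  have "x \<otimes> y = inv (x \<otimes> y)"
    using inv_involution[of "x \<otimes> y"] subgroup.m_closed[OF D x y] sq xc yc by simp
  also have "\<dots> = inv y \<otimes> inv x" using xc yc by (simp add: inv_mult_group)
  also have "\<dots> = y \<otimes> x" using inv_involution sq x y xc yc by simp
  finally show ?thesis .
qed

lemma (in group) hom_eq_on_generate:
  assumes H: "group H" and h1: "h1 \<in> hom G H" and h2: "h2 \<in> hom G H" and S: "S \<subseteq> carrier G"
    and eq: "\<forall>s\<in>S. h1 s = h2 s" and x: "x \<in> generate G S"
  shows "h1 x = h2 x"
proof -
  interpret h1: group_hom G H h1 using h1 H by (simp add: group_hom_def group_hom_axioms_def is_group)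
  interpret h2: group_hom G H h2 using h2 H by (simp add: group_hom_def group_hom_axioms_def is_group)
  show ?thesis
    using x
  proof (induction rule: generate.induct)
    case one
    show ?case by simp
  next
    case (incl s)
    then show ?case using eq by blast
  next
    case (inv s)
    then show ?case using eq S by auto
  next
    case (eng a b)
    then show ?case using generate_in_carrier[OF S] by simp
  qed
qed

lemma (in group) conj_involution_generate_closed:
  assumes A: "A \<subseteq> carrier G" and a: "a \<in> carrier G" "a \<otimes> a = \<one>"
    and conj: "\<forall>x\<in>A. a \<otimes> x \<otimes> a \<in> generate G A" and y: "y \<in> generate G A"
  shows "a \<otimes> y \<otimes> a \<in> generate G A"
  using y
proof (induction rule: generate.induct)
  case one
  then show ?case using a by (simp add: generate.one)
next
  case (incl x)
  then show ?case using conj by blast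
next
  case (inv x)
  have "x \<in> carrier G" using inv A by auto
  then have "a \<otimes> inv x \<otimes> a = inv (a \<otimes> x \<otimes> a)"
    using a inv_involution[OF a] by (simp add: inv_mult_group m_assoc)
  then show ?case using conj inv generate_m_inv_closed[OF A] by simp
next
  case (eng x y)
  have aa: "a \<otimes> (a \<otimes> z) = z" if "z \<in> carrier G" for z
    using a that by (simp flip: m_assoc)
  have "x \<in> carrier G" "y \<in> carrier G" using eng generate_in_carrier[OF A] by auto
  then have "a \<otimes> (x \<otimes> y) \<otimes> a = (a \<otimes> x \<otimes> a) \<otimes> (a \<otimes> y \<otimes> a)"
    using a by (simp add: m_assoc aa)
  then show ?case using eng generate.eng by metis
qed

text \<open>The set in the conclusion is \<open>H \<union> a H\<close>.\<close>

lemma (in group) subgroup_extend_involution: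
  assumes H: "subgroup H G" and a: "a \<in> carrier G" "a \<otimes> a = \<one>"
    and conj: "\<And>y. y \<in> H \<Longrightarrow> a \<otimes> y \<otimes> a \<in> H"
  shows "subgroup {x \<in> carrier G. x \<in> H \<or> a \<otimes> x \<in> H} G"
proof -
  interpret H: subgroup H G by (rule H)
  have aa: "a \<otimes> (a \<otimes> x) = x" if "x \<in> carrier G" for x
    using a that by (simp flip: m_assoc)
  have inv: "inv x \<in> H \<or> a \<otimes> inv x \<in> H" if x: "x \<in> carrier G" "x \<in> H \<or> a \<otimes> x \<in> H" for x
  proof -
    have "a \<otimes> inv x = a \<otimes> inv (a \<otimes> x) \<otimes> a"
      using x a inv_involution[OF a] by (simp add: inv_mult_group m_assoc aa)
    then show ?thesis using x conj by auto
  qed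
  have mult: "x \<otimes> y \<in> H \<or> a \<otimes> (x \<otimes> y) \<in> H"
    if x: "x \<in> carrier G" "x \<in> H \<or> a \<otimes> x \<in> H" and y: "y \<in> carrier G" "y \<in> H \<or> a \<otimes> y \<in> H"
    for x y
  proof -
    consider "x \<in> H" "y \<in> H" | "x \<in> H" "a \<otimes> y \<in> H" | "a \<otimes> x \<in> H" "y \<in> H"
      | "a \<otimes> x \<in> H" "a \<otimes> y \<in> H"
      using x y by blast
    then show ?thesis
    proof cases
      case 1
      then show ?thesis by simp
    next
      case 2
      have "a \<otimes> (x \<otimes> y) = (a \<otimes> x \<otimes> a) \<otimes> (a \<otimes> y)" using x y a by (simp add: m_assoc aa)
      then show ?thesis using 2 conj by simp
    next
      case 3
      have "a \<otimes> (x \<otimes> y) = (a \<otimes> x) \<otimes> y" using x y a by (simp add: m_assoc)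
      then show ?thesis using 3 by simp
    next
      case 4
      have "x \<otimes> y = (a \<otimes> (a \<otimes> x) \<otimes> a) \<otimes> (a \<otimes> y)" using x y a by (simp add: m_assoc aa)
      then show ?thesis using 4 conj by simp
    qed
  qed
  show ?thesis
    by (rule subgroupI) (use inv mult H.one_closed in auto)
qed

lemma (in group) card_generate_insert_involution:
  assumes A: "A \<subseteq> carrier G" and a: "a \<in> carrier G" "a \<otimes> a = \<one>"
    and conj: "\<forall>x\<in>A. a \<otimes> x \<otimes> a \<in> generate G A" and fin: "finite (generate G A)"
  shows "finite (generate G (insert a A)) \<and> card (generate G (insert a A)) \<le> 2 * card (generate G A)"
proof -
  let ?H = "generate G A"
  let ?K = "{x \<in> carrier G. x \<in> ?H \<or> a \<otimes> x \<in> ?H}"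
  have K: "subgroup ?K G"
    by (rule subgroup_extend_involution[OF generate_is_subgroup[OF A] a])
      (rule conj_involution_generate_closed[OF A a conj])
  have "generate G (insert a A) \<subseteq> ?K"
    using A a generate.incl[of _ A G] generate.one[of G A] by (intro generate_subgroup_incl[OF _ K]) auto
  also have "?K \<subseteq> ?H \<union> (\<lambda>x. a \<otimes> x) ` ?H"
  proof
    fix x assume x: "x \<in> ?K"
    have "x = a \<otimes> (a \<otimes> x)" using x a by (simp flip: m_assoc)
    then show "x \<in> ?H \<union> (\<lambda>x. a \<otimes> x) ` ?H" using x by blast
  qed
  finally have sub: "generate G (insert a A) \<subseteq> ?H \<union> (\<lambda>x. a \<otimes> x) ` ?H" .
  have "card (?H \<union> (\<lambda>x. a \<otimes> x) ` ?H) \<le> card ?H + card ((\<lambda>x. a \<otimes> x) ` ?H)"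
    by (rule card_Un_le)
  also have "\<dots> \<le> 2 * card ?H" using card_image_le[OF fin] by simp
  moreover have "finite (?H \<union> (\<lambda>x. a \<otimes> x) ` ?H)" using fin by simp
  ultimately show ?thesis using sub card_mono finite_subset le_trans by metis
qed

lemma (in group) card_generate_commuting_involutions:
  assumes "finite B" "B \<subseteq> carrier G"
    and "\<forall>x\<in>B. \<forall>y\<in>B. x \<otimes> y = y \<otimes> x" "\<forall>x\<in>B. x \<otimes> x = \<one>"
  shows "finite (generate G B) \<and> card (generate G B) \<le> 2 ^ card B"
  using assms
proof (induction B rule: finite_induct)
  case empty
  then show ?case by (simp add: generate_empty)
next
  case (insert a A)
  have conj: "\<forall>x\<in>A. a \<otimes> x \<otimes> a \<in> generate G A"
  proof
    fix x assume x: "x \<in> A"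
    have ax: "a \<otimes> x = x \<otimes> a" using insert.prems x by blast
    have "a \<in> carrier G" "x \<in> carrier G" "a \<otimes> a = \<one>" using insert.prems x by auto
    then have "a \<otimes> x \<otimes> a = x" by (simp add: ax m_assoc)
    then show "a \<otimes> x \<otimes> a \<in> generate G A" using generate.incl[OF x] by simp
  qed
  have IH: "finite (generate G A) \<and> card (generate G A) \<le> 2 ^ card A"
    using insert.IH insert.prems by blast
  have "A \<subseteq> carrier G" "a \<in> carrier G" "a \<otimes> a = \<one>" using insert.prems by auto
  then have "finite (generate G (insert a A)) \<and>
      card (generate G (insert a A)) \<le> 2 * card (generate G A)"
    using card_generate_insert_involution conj IH by blast
  then show ?case using IH insert.hyps by simp
qed

lemma (in group) order_eq_image_kernel:
  assumes h: "h \<in> hom G H" "group H" and surj: "h ` carrier G = carrier H"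
  shows "order G = order H * card (kernel G H h)"
proof -
  interpret h: group_hom G H h using h by (simp add: group_hom_def group_hom_axioms_def is_group)
  have "bij_betw (\<lambda>C. the_elem (h ` C)) (carrier (G Mod (kernel G H h))) (carrier H)"
    using h.FactGroup_iso_set[OF surj] by (simp add: iso_def)
  then have "card (rcosets (kernel G H h)) = order H"
    by (simp add: bij_betw_same_card FactGroup_def order_def)
  then show ?thesis using lagrange[OF h.subgroup_kernel] by simp
qed

lemma (in group_hom) derived_subset_kernel:
  assumes "comm_group H"
  shows "derived G (carrier G) \<subseteq> kernel G H h"
proof
  fix x assume x: "x \<in> derived G (carrier G)"
  have "h x \<in> derived H (h ` carrier G)" using derived_img[of "carrier G"] x by auto
  also have "\<dots> \<subseteq> derived H (carrier H)" by (rule H.mono_derived) auto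
  also have "\<dots> = {\<one>\<^bsub>H\<^esub>}" by (rule comm_group.derived_eq_singleton[OF assms]) simp
  finally show "x \<in> kernel G H h" using x G.derived_in_carrier by (auto simp: kernel_def)
qed

section \<open>Homomorphisms to \<open>V_[n]\<close>\<close>

lemma mem_symdiff [simp]: "x \<in> symdiff A B \<longleftrightarrow> (x \<in> A) \<noteq> (x \<in> B)"
  by (auto simp: symdiff_def)

lemma symdiff_empty_left [simp]: "symdiff {} A = A" by (auto simp: symdiff_def)
lemma symdiff_empty_right [simp]: "symdiff A {} = A" by (auto simp: symdiff_def)
lemma symdiff_self [simp]: "symdiff A A = {}" by (auto simp: symdiff_def)
lemma symdiff_commute: "symdiff A B = symdiff B A" by (auto simp: symdiff_def)
lemma symdiff_assoc: "symdiff (symdiff A B) C = symdiff A (symdiff B C)" by (auto simp: symdiff_def)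
lemma finite_symdiff: "finite A \<Longrightarrow> finite B \<Longrightarrow> finite (symdiff A B)" by (auto simp: symdiff_def)

lemma Vn_simps [simp]:
  "carrier (Vn n) = Pow {1..n}" "x \<otimes>\<^bsub>Vn n\<^esub> y = symdiff x y" "\<one>\<^bsub>Vn n\<^esub> = {}"
  by (simp_all add: Vn_def)

lemma Vn_comm_group: "comm_group (Vn n)"
proof (rule comm_groupI)
  show "\<And>x. x \<in> carrier (Vn n) \<Longrightarrow> \<exists>y\<in>carrier (Vn n). y \<otimes>\<^bsub>Vn n\<^esub> x = \<one>\<^bsub>Vn n\<^esub>"
    by auto
qed (auto simp: symdiff_assoc symdiff_commute symdiff_def)

lemma Vn_group: "group (Vn n)"
  using Vn_comm_group by (rule comm_group.axioms)

lemma Vn_inv [simp]: "S \<in> carrier (Vn n) \<Longrightarrow> inv\<^bsub>Vn n\<^esub> S = S"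
  using group.inv_involution[OF Vn_group] by simp

lemma (in group) Vn_hom_onto_from_generators:
  assumes phi: "\<phi> \<in> hom G (Vn n)" and g: "\<And>i. i \<in> {1..n} \<Longrightarrow> g i \<in> carrier G \<and> \<phi> (g i) = {i}"
    and P: "P \<subseteq> {1..n}"
  shows "\<exists>x\<in>generate G (g ` {1..n}). \<phi> x = P"
proof -
  have "finite P" using P finite_subset by blast
  then show ?thesis
    using P
  proof (induction P rule: finite_induct)
    case empty
    have "\<phi> \<one> = {}" using hom_one[OF phi is_group Vn_group] by simp
    then show ?case using generate.one by blast
  next
    case (insert i P)
    obtain x where x: "x \<in> generate G (g ` {1..n})" "\<phi> x = P" using insert by auto
    have i: "i \<in> {1..n}" using insert by auto
    have "x \<in> carrier G" using x generate_in_carrier[of "g ` {1..n}"] g by blast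
    then have "\<phi> (x \<otimes> g i) = symdiff P {i}" using hom_mult[OF phi] x g[OF i] by simp
    also have "\<dots> = insert i P" using insert.hyps by auto
    finally show ?case using x generate.eng[OF x(1) generate.incl[of "g i"]] i by blast
  qed
qed

lemma (in comm_group) finprod_symdiff:
  assumes "finite S" "finite T" and q: "q \<in> (S \<union> T) \<rightarrow> carrier G"
    and sq: "\<forall>i\<in>S \<inter> T. q i \<otimes> q i = \<one>"
  shows "finprod G q (symdiff S T) = finprod G q S \<otimes> finprod G q T"
proof -
  have fin: "finite (S - T)" "finite (T - S)" "finite (S \<inter> T)" using assms by auto
  have q': "q \<in> (S - T) \<rightarrow> carrier G" "q \<in> (T - S) \<rightarrow> carrier G" "q \<in> (S \<inter> T) \<rightarrow> carrier G"
    using q by auto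
  have "symdiff S T = (S - T) \<union> (T - S)" by (auto simp: symdiff_def)
  then have ST: "finprod G q (symdiff S T) = finprod G q (S - T) \<otimes> finprod G q (T - S)"
    using finprod_Un_disjoint[of "S - T" "T - S" q] fin q' by auto
  have "S = (S - T) \<union> (S \<inter> T)" by auto
  then have S: "finprod G q S = finprod G q (S - T) \<otimes> finprod G q (S \<inter> T)"
    using finprod_Un_disjoint[of "S - T" "S \<inter> T" q] fin q' by auto
  have "T = (T - S) \<union> (S \<inter> T)" by auto
  then have T: "finprod G q T = finprod G q (T - S) \<otimes> finprod G q (S \<inter> T)"
    using finprod_Un_disjoint[of "T - S" "S \<inter> T" q] fin q' by auto
  have "finprod G q (S \<inter> T) \<otimes> finprod G q (S \<inter> T) = finprod G (\<lambda>i. q i \<otimes> q i) (S \<inter> T)"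
    using q' by (simp add: finprod_multf)
  also have "\<dots> = finprod G (\<lambda>i. \<one>) (S \<inter> T)" by (rule finprod_cong') (use sq in auto)
  finally have "finprod G q (S \<inter> T) \<otimes> finprod G q (S \<inter> T) = \<one>" by simp
  then show ?thesis unfolding ST S T using q' by (simp add: m_ac)
qed

lemma (in comm_group) finprod_hom_Vn:
  assumes q: "\<And>i. i \<in> {1..n} \<Longrightarrow> q i \<in> carrier G" and sq: "\<And>i. i \<in> {1..n} \<Longrightarrow> q i \<otimes> q i = \<one>"
  shows "finprod G q \<in> hom (Vn n) G"
proof (rule homI)
  fix S assume "S \<in> carrier (Vn n)"
  then show "finprod G q S \<in> carrier G" using q by (auto intro!: finprod_closed)
next
  fix S T assume "S \<in> carrier (Vn n)" "T \<in> carrier (Vn n)"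
  then show "finprod G q (S \<otimes>\<^bsub>Vn n\<^esub> T) = finprod G q S \<otimes> finprod G q T"
    using finite_subset[of _ "{1..n}"] q sq by (auto intro!: finprod_symdiff)
qed

text \<open>Modulo the derived subgroup, the product of the \<open>g i\<close> over \<open>i \<in> \<phi> x\<close> recovers \<open>x\<close>;
  hence \<open>\<phi> x = {}\<close> forces \<open>x\<close> into the derived subgroup.\<close>

lemma (in group) kernel_subset_derived:
  assumes phi: "\<phi> \<in> hom G (Vn n)"
    and g: "\<And>i. i \<in> {1..n} \<Longrightarrow> g i \<in> carrier G \<and> \<phi> (g i) = {i} \<and> g i \<otimes> g i = \<one>"
    and gen: "carrier G \<subseteq> generate G (g ` {1..n})"
  shows "kernel G (Vn n) \<phi> \<subseteq> derived G (carrier G)"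
proof
  let ?D = "derived G (carrier G)"
  let ?Q = "G Mod ?D"
  interpret D: normal ?D G by (rule derived_self_is_normal)
  interpret Q: comm_group ?Q by (rule derived_quot_is_comm_group)
  have pi: "(#>) ?D \<in> hom G ?Q" by (rule D.r_coset_hom_Mod)
  define q where "q i = ?D #> g i" for i
  have q: "q i \<in> carrier ?Q" "q i \<otimes>\<^bsub>?Q\<^esub> q i = \<one>\<^bsub>?Q\<^esub>" if "i \<in> {1..n}" for i
  proof -
    have gi: "g i \<in> carrier G" "g i \<otimes> g i = \<one>" using g[OF that] by auto
    show "q i \<in> carrier ?Q" unfolding q_def using hom_in_carrier[OF pi gi(1)] .
    have "q i \<otimes>\<^bsub>?Q\<^esub> q i = ?D #> (g i \<otimes> g i)" unfolding q_def using gi by (simp add: D.rcos_sum)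
    then show "q i \<otimes>\<^bsub>?Q\<^esub> q i = \<one>\<^bsub>?Q\<^esub>" using gi(2) D.subset by simp
  qed
  have psi: "finprod ?Q q \<in> hom (Vn n) ?Q" by (rule Q.finprod_hom_Vn) (use q in auto)
  note comp = Group.hom_compose[OF phi psi]
  have on_gens: "(finprod ?Q q \<circ> \<phi>) (g i) = ?D #> g i" if "i \<in> {1..n}" for i
  proof -
    have "finprod ?Q q {i} = q i \<otimes>\<^bsub>?Q\<^esub> finprod ?Q q {}"
      by (rule Q.finprod_insert) (use q[OF that] in auto)
    then show ?thesis using g[OF that] Q.r_one[OF q(1)[OF that]] by (simp only: q_def Q.finprod_empty comp_def)
  qed
  have gs: "g ` {1..n} \<subseteq> carrier G" using g by auto
  have agree: "(finprod ?Q q \<circ> \<phi>) x = ?D #> x" if "x \<in> carrier G" for x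
    using hom_eq_on_generate[OF Q.is_group comp pi gs] on_gens gen that by blast
  fix x assume "x \<in> kernel G (Vn n) \<phi>"
  then have x: "x \<in> carrier G" "\<phi> x = {}" by (auto simp: kernel_def)
  then have "?D #> x = ?D" using agree[OF x(1)] by simp
  then show "x \<in> ?D" using rcos_self[OF x(1) D.subgroup_axioms] by simp
qed

lemma expansion_groupI:
  assumes G: "group G" and phi: "\<phi> \<in> hom G (Vn n)"
    and g: "\<And>i. i \<in> {1..n} \<Longrightarrow> g i \<in> carrier G \<and> \<phi> (g i) = {i} \<and> g i \<otimes>\<^bsub>G\<^esub> g i = \<one>\<^bsub>G\<^esub>"
    and gen: "carrier G \<subseteq> generate G (g ` {1..n})"
    and sq: "\<And>x. x \<in> derived G (carrier G) \<Longrightarrow> x \<otimes>\<^bsub>G\<^esub> x = \<one>\<^bsub>G\<^esub>"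
  shows "expansion_group n G \<phi> g"
proof -
  interpret G: group G by (rule G)
  interpret phi: group_hom G "Vn n" \<phi>
    using phi by (simp add: group_hom_def group_hom_axioms_def G Vn_group)
  have ker: "kernel G (Vn n) \<phi> = derived G (carrier G)"
    using phi.derived_subset_kernel[OF Vn_comm_group] G.kernel_subset_derived[OF phi g gen] by blast
  have "x \<otimes>\<^bsub>G\<^esub> y = y \<otimes>\<^bsub>G\<^esub> x" if "x \<in> derived G (carrier G)" "y \<in> derived G (carrier G)" for x y
    using G.exponent2_subgroup_comm[OF G.derived_is_subgroup[OF order_refl]] sq that by blast
  then show ?thesis
    unfolding expansion_group_def ker using G phi g sq by blast
qed

section \<open>The groups \<open>G_i([n])\<close>\<close>

lemma mem_act_gen: "B \<in> act_gen j u \<longleftrightarrow> (B \<in> u) \<noteq> (j \<in> B \<and> B - {j} \<in> u)"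
proof -
  have "B \<in> {insert j A | A. A \<in> u \<and> j \<notin> A} \<longleftrightarrow> j \<in> B \<and> B - {j} \<in> u"
    by (auto intro!: exI[of _ "B - {j}"])
  then show ?thesis by (simp add: act_gen_def)
qed

lemma act_gen_commute: "act_gen j (act_gen k u) = act_gen k (act_gen j u)"
proof (cases "j = k")
  case False
  have "B - {j} - {k} = B - {k} - {j}" for B :: "nat set" by auto
  then show ?thesis
    by (intro Set.set_eqI) (simp add: mem_act_gen False False[symmetric], blast)
qed simp

lemma act_gen_act_gen [simp]: "act_gen j (act_gen j u) = u"
  by (rule Set.set_eqI) (simp add: mem_act_gen, blast)

lemma act_gen_symdiff: "act_gen j (symdiff u v) = symdiff (act_gen j u) (act_gen j v)"
  by (rule Set.set_eqI) (simp add: mem_act_gen, blast)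

lemma act_gen_empty [simp]: "act_gen k {} = {}"
  by (rule Set.set_eqI) (auto simp: mem_act_gen)

lemma act_gen_singleton: "k \<notin> S \<Longrightarrow> act_gen k {S} = {S, insert k S}"
  by (rule Set.set_eqI) (auto simp: mem_act_gen)

interpretation act_gen: comp_fun_commute act_gen
  by unfold_locales (rule ext, simp add: act_gen_commute)

lemma act_empty [simp]: "act {} u = u"
  by (simp add: act_def)

lemma act_insert: "finite w \<Longrightarrow> j \<notin> w \<Longrightarrow> act (insert j w) u = act_gen j (act w u)"
  by (simp add: act_def act_gen.fold_insert)

lemma act_symdiff: "finite w \<Longrightarrow> act w (symdiff u v) = symdiff (act w u) (act w v)"
  by (induction w rule: finite_induct) (simp_all add: act_insert act_gen_symdiff)

lemma act_singleton [simp]: "act {j} u = act_gen j u"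
  using act_insert[of "{}" j u] by simp

lemma act_empty_set [simp]: "finite w \<Longrightarrow> act w {} = {}"
  using act_symdiff[of w "{}" "{}"] by simp

lemma act_gen_act: "finite v \<Longrightarrow> act_gen j (act v u) = act (symdiff v {j}) u"
proof (cases "j \<in> v")
  case True
  assume "finite v"
  then have "act v u = act_gen j (act (v - {j}) u)"
    using act_insert[of "v - {j}" j u] True by (simp add: insert_absorb)
  moreover have "symdiff v {j} = v - {j}" using True by auto
  ultimately show ?thesis by simp
next
  case False
  assume "finite v"
  moreover have "symdiff v {j} = insert j v" using False by auto
  ultimately show ?thesis using act_insert False by simp
qed

lemma act_act: "finite w \<Longrightarrow> finite w' \<Longrightarrow> act w (act w' u) = act (symdiff w w') u"
proof (induction w rule: finite_induct)
  case (insert j w)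
  have "act (insert j w) (act w' u) = act_gen j (act (symdiff w w') u)"
    using insert by (simp add: act_insert)
  also have "\<dots> = act (symdiff (symdiff w w') {j}) u"
    using insert by (simp add: act_gen_act finite_symdiff)
  also have "symdiff (symdiff w w') {j} = symdiff (insert j w) w'"
    using insert.hyps by auto
  finally show ?case .
qed simp

lemma act_gen_preserves:
  assumes u: "u \<subseteq> {A. A \<subseteq> {1..n} \<and> i \<in> A}" and j: "j \<in> {1..n}"
  shows "act_gen j u \<subseteq> {A. A \<subseteq> {1..n} \<and> i \<in> A}"
proof
  fix B assume B: "B \<in> act_gen j u"
  show "B \<in> {A. A \<subseteq> {1..n} \<and> i \<in> A}"
  proof (cases "B \<in> u")
    case False
    then have "j \<in> B" "B - {j} \<in> u" using B by (simp_all add: mem_act_gen)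
    then show ?thesis using u j by blast
  qed (use u in blast)
qed

lemma act_preserves:
  assumes "finite w" "w \<subseteq> {1..n}" "u \<subseteq> {A. A \<subseteq> {1..n} \<and> i \<in> A}"
  shows "act w u \<subseteq> {A. A \<subseteq> {1..n} \<and> i \<in> A}"
  using assms
proof (induction w rule: finite_induct)
  case (insert j w)
  then show ?case using act_gen_preserves[of "act w u" n i j] by (simp add: act_insert)
qed simp

lemma act_singleton_coeff: "finite w \<Longrightarrow> i \<notin> w \<Longrightarrow> {i} \<in> act w u \<longleftrightarrow> {i} \<in> u"
  by (induction w rule: finite_induct) (auto simp: act_insert mem_act_gen)

lemma Gi_mem: "(u, w) \<in> carrier (Gi n i) \<longleftrightarrow> u \<subseteq> {A. A \<subseteq> {1..n} \<and> i \<in> A} \<and> w \<subseteq> {1..n} - {i}"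
  by (auto simp: Gi_def Ucar_def)

lemma Gi_mult: "(u, w) \<otimes>\<^bsub>Gi n i\<^esub> (u', w') = (symdiff u (act w u'), symdiff w w')"
  by (simp add: Gi_def)

lemma Gi_one: "\<one>\<^bsub>Gi n i\<^esub> = ({}, {})"
  by (simp add: Gi_def)

lemma Gi_group: "group (Gi n i)"
proof (rule groupI)
  have fin: "finite w" if "w \<subseteq> {1..n} - {i}" for w
    using that finite_subset by blast
  fix x y assume x: "x \<in> carrier (Gi n i)" and y: "y \<in> carrier (Gi n i)"
  obtain u w u' w' where xy: "x = (u, w)" "y = (u', w')" by fastforce
  have "act w u' \<subseteq> {A. A \<subseteq> {1..n} \<and> i \<in> A}"
    using x y act_preserves[of w n u' i] fin by (auto simp: xy Gi_mem)
  then show "x \<otimes>\<^bsub>Gi n i\<^esub> y \<in> carrier (Gi n i)"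
    using x y by (auto simp: xy Gi_mem Gi_mult symdiff_def)
next
  have fin: "finite w" if "w \<subseteq> {1..n} - {i}" for w
    using that finite_subset by blast
  fix x y z assume "x \<in> carrier (Gi n i)" "y \<in> carrier (Gi n i)" "z \<in> carrier (Gi n i)"
  moreover obtain u w u' w' u'' w'' where "x = (u, w)" "y = (u', w')" "z = (u'', w'')" by fastforce
  ultimately show "x \<otimes>\<^bsub>Gi n i\<^esub> y \<otimes>\<^bsub>Gi n i\<^esub> z = x \<otimes>\<^bsub>Gi n i\<^esub> (y \<otimes>\<^bsub>Gi n i\<^esub> z)"
    using fin by (simp add: Gi_mem Gi_mult act_symdiff act_act symdiff_assoc)
next
  have fin: "finite w" if "w \<subseteq> {1..n} - {i}" for w
    using that finite_subset by blast
  fix x assume x: "x \<in> carrier (Gi n i)"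
  obtain u w where xu: "x = (u, w)" by fastforce
  have "(act w u, w) \<in> carrier (Gi n i)"
    using x act_preserves[of w n u i] fin by (auto simp: xu Gi_mem)
  moreover have "(act w u, w) \<otimes>\<^bsub>Gi n i\<^esub> x = \<one>\<^bsub>Gi n i\<^esub>"
    using x fin by (simp add: xu Gi_mem Gi_mult Gi_one act_act)
  ultimately show "\<exists>y\<in>carrier (Gi n i). y \<otimes>\<^bsub>Gi n i\<^esub> x = \<one>\<^bsub>Gi n i\<^esub>" by blast
qed (auto simp: Gi_mem Gi_mult Gi_one)

lemma phii_mult:
  assumes "x \<in> carrier (Gi n i)"
  shows "phii i (x \<otimes>\<^bsub>Gi n i\<^esub> y) = symdiff (phii i x) (phii i y)"
proof -
  obtain u w u' w' where xy: "x = (u, w)" "y = (u', w')" by fastforce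
  have "finite w" "i \<notin> w" using assms finite_subset by (auto simp: xy Gi_mem)
  then have "{i} \<in> act w u' \<longleftrightarrow> {i} \<in> u'" by (rule act_singleton_coeff)
  then show ?thesis by (intro Set.set_eqI) (simp add: xy Gi_mult phii_def, blast)
qed

lemma phii_carrier: "x \<in> carrier (Gi n i) \<Longrightarrow> i \<in> {1..n} \<Longrightarrow> phii i x \<subseteq> {1..n}"
  by (cases x) (auto simp: phii_def Gi_mem)

lemma phii_gi: "phii i (gi i j) = {j}"
  by (auto simp: phii_def gi_def)

section \<open>The group \<open>\<G>([n])\<close>\<close>

lemma ProdG_group: "group (ProdG n)"
  unfolding ProdG_def by (rule product_group) (rule Gi_group)

lemma ProdG_carrier: "carrier (ProdG n) = (\<Pi>\<^sub>E i\<in>{1..n}. carrier (Gi n i))"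
  by (simp add: ProdG_def)

lemma ProdG_mult_apply: "i \<in> {1..n} \<Longrightarrow> (x \<otimes>\<^bsub>ProdG n\<^esub> y) i = x i \<otimes>\<^bsub>Gi n i\<^esub> y i"
  by (simp add: ProdG_def)

lemma ProdG_one_apply: "i \<in> {1..n} \<Longrightarrow> \<one>\<^bsub>ProdG n\<^esub> i = ({}, {})"
  by (simp add: ProdG_def Gi_one)

lemma ProdG_eqI:
  "x \<in> carrier (ProdG n) \<Longrightarrow> y \<in> carrier (ProdG n) \<Longrightarrow> (\<And>i. i \<in> {1..n} \<Longrightarrow> x i = y i) \<Longrightarrow> x = y"
  unfolding ProdG_carrier by (rule PiE_ext)

lemma gamma_apply: "i \<in> {1..n} \<Longrightarrow> gamma n j i = gi i j"
  by (simp add: gamma_def)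

lemma gamma_carrier: "j \<in> {1..n} \<Longrightarrow> gamma n j \<in> carrier (ProdG n)"
  by (auto simp: gamma_def ProdG_carrier gi_def Gi_mem)

lemma gamma_square: "j \<in> {1..n} \<Longrightarrow> gamma n j \<otimes>\<^bsub>ProdG n\<^esub> gamma n j = \<one>\<^bsub>ProdG n\<^esub>"
proof (rule ProdG_eqI)
  interpret P: group "ProdG n" by (rule ProdG_group)
  assume j: "j \<in> {1..n}"
  show "gamma n j \<otimes>\<^bsub>ProdG n\<^esub> gamma n j \<in> carrier (ProdG n)" using gamma_carrier[OF j] by simp
  show "\<one>\<^bsub>ProdG n\<^esub> \<in> carrier (ProdG n)" by simp
  show "(gamma n j \<otimes>\<^bsub>ProdG n\<^esub> gamma n j) i = \<one>\<^bsub>ProdG n\<^esub> i" if "i \<in> {1..n}" for i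
    using that by (simp add: ProdG_mult_apply gamma_apply ProdG_one_apply gi_def Gi_mult)
qed

lemma GG_carrier: "carrier (GG n) = generate (ProdG n) (gamma n ` {1..n})"
proof -
  have "carrier (ProdG n) \<inter> gamma n ` {1..n} = gamma n ` {1..n}" using gamma_carrier by blast
  then show ?thesis by (simp add: GG_def carrier_subgroup_generated)
qed

lemma GG_mult [simp]: "(\<otimes>\<^bsub>GG n\<^esub>) = (\<otimes>\<^bsub>ProdG n\<^esub>)"
  by (simp add: GG_def)

lemma GG_one [simp]: "\<one>\<^bsub>GG n\<^esub> = \<one>\<^bsub>ProdG n\<^esub>"
  by (simp add: GG_def)

lemma GG_group: "group (GG n)"
  unfolding GG_def by (rule group.group_subgroup_generated[OF ProdG_group])

lemma GG_subset_ProdG: "carrier (GG n) \<subseteq> carrier (ProdG n)"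
  unfolding GG_carrier using group.generate_incl[OF ProdG_group] gamma_carrier by blast

lemma gamma_GG: "j \<in> {1..n} \<Longrightarrow> gamma n j \<in> carrier (GG n)"
  unfolding GG_carrier by (rule generate.incl) blast

lemma GG_generated: "carrier (GG n) \<subseteq> generate (GG n) (gamma n ` {1..n})"
proof -
  interpret P: group "ProdG n" by (rule ProdG_group)
  have sub: "subgroup (carrier (GG n)) (ProdG n)"
    unfolding GG_carrier by (rule P.generate_is_subgroup) (use gamma_carrier in blast)
  have GG: "GG n = (ProdG n)\<lparr>carrier := carrier (GG n)\<rparr>"
    by (simp add: GG_def subgroup_generated_def)
  have "generate (GG n) (gamma n ` {1..n}) = generate (ProdG n) (gamma n ` {1..n})"
    by (subst GG, rule P.generate_consistent[OF _ sub]) (use gamma_GG in blast)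
  then show ?thesis by (simp add: GG_carrier)
qed

lemma GG_apply_carrier: "x \<in> carrier (GG n) \<Longrightarrow> i \<in> {1..n} \<Longrightarrow> x i \<in> carrier (Gi n i)"
  using GG_subset_ProdG by (fastforce simp: ProdG_carrier)

text \<open>This makes \<open>gbold\<close>, defined by a definite description, well defined.\<close>

lemma GG_phii_eq:
  assumes x: "x \<in> carrier (GG n)" and i: "i \<in> {1..n}" and j: "j \<in> {1..n}"
  shows "phii i (x i) = phii j (x j)"
proof -
  interpret P: group "ProdG n" by (rule ProdG_group)
  have "x \<in> generate (ProdG n) (gamma n ` {1..n})" using x by (simp add: GG_carrier)
  then show ?thesis
  proof (induction rule: generate.induct)
    case one
    show ?case using i j by (simp add: ProdG_one_apply phii_def)
  next
    case (incl h)
    then show ?case using i j by (auto simp: gamma_apply phii_gi)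
  next
    case (inv h)
    then obtain k where "k \<in> {1..n}" "h = gamma n k" by blast
    then have "inv\<^bsub>ProdG n\<^esub> h = h" using P.inv_involution gamma_carrier gamma_square by simp
    then show ?case using inv i j by (auto simp: gamma_apply phii_gi)
  next
    case (eng h1 h2)
    have "h1 \<in> carrier (ProdG n)" using eng P.generate_in_carrier gamma_carrier by blast
    then have "h1 k \<in> carrier (Gi n k)" if "k \<in> {1..n}" for k using that by (auto simp: ProdG_carrier)
    then show ?case using eng i j by (simp add: ProdG_mult_apply phii_mult)
  qed
qed

lemma gbold_eq:
  assumes "x \<in> carrier (GG n)" "i \<in> {1..n}"
  shows "gbold n x = phii i (x i)"
  unfolding gbold_def
proof (rule the_equality)
  show "\<forall>j\<in>{1..n}. phii j (x j) = phii i (x i)" using GG_phii_eq assms by blast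
  show "v = phii i (x i)" if "\<forall>j\<in>{1..n}. phii j (x j) = v" for v
    using that assms(2) by blast
qed

lemma gbold_hom: "n \<ge> 1 \<Longrightarrow> gbold n \<in> hom (GG n) (Vn n)"
proof (rule homI)
  assume n: "n \<ge> 1"
  then have one: "1 \<in> {1..n}" by simp
  fix x assume x: "x \<in> carrier (GG n)"
  show "gbold n x \<in> carrier (Vn n)"
    using phii_carrier[OF GG_apply_carrier[OF x one] one] by (simp add: gbold_eq[OF x one])
next
  assume n: "n \<ge> 1"
  then have one: "1 \<in> {1..n}" by simp
  fix x y assume x: "x \<in> carrier (GG n)" and y: "y \<in> carrier (GG n)"
  have xy: "x \<otimes>\<^bsub>GG n\<^esub> y \<in> carrier (GG n)" using monoid.m_closed[OF group.is_monoid[OF GG_group] x y] .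
  show "gbold n (x \<otimes>\<^bsub>GG n\<^esub> y) = gbold n x \<otimes>\<^bsub>Vn n\<^esub> gbold n y"
    using gbold_eq[OF xy one] gbold_eq[OF x one] gbold_eq[OF y one] GG_apply_carrier[OF x one] one
    by (simp add: ProdG_mult_apply phii_mult)
qed

lemma gbold_gamma: "n \<ge> 1 \<Longrightarrow> j \<in> {1..n} \<Longrightarrow> gbold n (gamma n j) = {j}"
  using gbold_eq[OF gamma_GG, of j n 1] by (simp add: gamma_apply phii_gi)

lemma GG_kernel_apply:
  assumes n: "n \<ge> 1" and x: "x \<in> kernel (GG n) (Vn n) (gbold n)" and i: "i \<in> {1..n}"
  shows "x i = (fst (x i), {})"
proof -
  have xc: "x \<in> carrier (GG n)" and "gbold n x = {}" using x by (auto simp: kernel_def)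
  then have "phii i (x i) = {}" using gbold_eq[OF xc i] by simp
  moreover have "i \<notin> snd (x i)" using GG_apply_carrier[OF xc i] by (cases "x i") (auto simp: Gi_mem)
  ultimately show ?thesis by (auto simp: phii_def symdiff_def prod_eq_iff split: if_splits)
qed

lemma GG_kernel_square:
  assumes n: "n \<ge> 1" and x: "x \<in> kernel (GG n) (Vn n) (gbold n)"
  shows "x \<otimes>\<^bsub>GG n\<^esub> x = \<one>\<^bsub>GG n\<^esub>"
proof -
  interpret P: group "ProdG n" by (rule ProdG_group)
  have xc: "x \<in> carrier (ProdG n)" using x GG_subset_ProdG by (auto simp: kernel_def)
  have "(x \<otimes>\<^bsub>ProdG n\<^esub> x) i = \<one>\<^bsub>ProdG n\<^esub> i" if "i \<in> {1..n}" for i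
    using GG_kernel_apply[OF n x that] that
    by (simp add: ProdG_mult_apply ProdG_one_apply) (metis Gi_mult act_empty symdiff_self)
  then show ?thesis unfolding GG_mult GG_one by (intro ProdG_eqI) (use xc in auto)
qed

theorem GG_expansion: "n \<ge> 1 \<Longrightarrow> expansion_group n (GG n) (gbold n) (gamma n)"
proof (rule expansion_groupI[OF GG_group gbold_hom _ GG_generated])
  assume n: "n \<ge> 1"
  show "gamma n i \<in> carrier (GG n) \<and> gbold n (gamma n i) = {i} \<and>
      gamma n i \<otimes>\<^bsub>GG n\<^esub> gamma n i = \<one>\<^bsub>GG n\<^esub>" if "i \<in> {1..n}" for i
    using that gamma_GG gbold_gamma[OF n] gamma_square by simp
  interpret h: group_hom "GG n" "Vn n" "gbold n"
    by (simp add: group_hom_def group_hom_axioms_def GG_group Vn_group gbold_hom[OF n])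
  show "x \<otimes>\<^bsub>GG n\<^esub> x = \<one>\<^bsub>GG n\<^esub>" if "x \<in> derived (GG n) (carrier (GG n))" for x
    using GG_kernel_square[OF n] h.derived_subset_kernel[OF Vn_comm_group] that by blast
qed

declare One_nat_def [simp del]

section \<open>The order of \<open>\<G>([n])\<close> from below\<close>

text \<open>The index set \<open>J\<close> of a basis of the kernel of \<open>\<G>([n]) \<rightarrow> V_[n]\<close>.\<close>

definition nonmin_pairs :: "nat \<Rightarrow> (nat set \<times> nat) set" where
  "nonmin_pairs n = {(S, j). S \<subseteq> {1..n} \<and> j \<in> S \<and> j \<noteq> Min S}"

lemma nonmin_pairsD:
  assumes "(S, j) \<in> nonmin_pairs n"
  shows "S \<subseteq> {1..n}" "j \<in> S" "j \<noteq> Min S" "finite S" "Min S \<in> S" "j \<in> {1..n}" "Min S \<in> {1..n}"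
proof -
  show S: "S \<subseteq> {1..n}" "j \<in> S" "j \<noteq> Min S" using assms by (auto simp: nonmin_pairs_def)
  show "finite S" using S finite_subset by blast
  then show "Min S \<in> S" using S(2) by (metis Min_in empty_iff)
  then show "j \<in> {1..n}" "Min S \<in> {1..n}" using S by auto
qed

lemma finite_nonmin_pairs: "finite (nonmin_pairs n)"
proof (rule finite_subset)
  show "nonmin_pairs n \<subseteq> Pow {1..n} \<times> {1..n}" unfolding nonmin_pairs_def by blast
qed simp

lemma card_subsets_containing:
  assumes j: "j \<in> {1..(n::nat)}"
  shows "card {S. S \<subseteq> {1..n} \<and> j \<in> S} = 2 ^ (n - 1)"
proof -
  have "bij_betw (\<lambda>S. S - {j}) {S. S \<subseteq> {1..n} \<and> j \<in> S} (Pow ({1..n} - {j}))"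
    by (rule bij_betw_byWitness[where f' = "insert j"]) (use j in blast)+
  then have "card {S. S \<subseteq> {1..n} \<and> j \<in> S} = card (Pow ({1..n} - {j}))"
    by (rule bij_betw_same_card)
  then show ?thesis using j by (simp add: card_Pow)
qed

lemma card_member_pairs: "card {(S, j). S \<subseteq> {1..n} \<and> j \<in> S} = n * 2 ^ (n - 1)"
proof -
  have "{(S, j). S \<subseteq> {1..n} \<and> j \<in> S} = prod.swap ` (SIGMA j:{1..n}. {S. S \<subseteq> {1..n} \<and> j \<in> S})"
    by (rule Set.set_eqI) (force simp: image_iff)
  then have "card {(S, j). S \<subseteq> {1..n} \<and> j \<in> S} = card (SIGMA j:{1..n}. {S. S \<subseteq> {1..n} \<and> j \<in> S})"
    by (simp add: card_image)
  also have "\<dots> = (\<Sum>j\<in>{1..n}. card {S. S \<subseteq> {1..n} \<and> j \<in> S})"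
    by (rule card_SigmaI) auto
  also have "\<dots> = n * 2 ^ (n - 1)" by (simp add: card_subsets_containing)
  finally show ?thesis .
qed

lemma card_nonmin_pairs: "card (nonmin_pairs n) = n * 2 ^ (n - 1) - (2 ^ n - 1)"
proof -
  let ?all = "{(S, j). S \<subseteq> {1..n} \<and> j \<in> S}"
  let ?min = "(\<lambda>S. (S, Min S)) ` (Pow {1..n} - {{}})"
  have fin: "finite ?all" by (rule finite_subset[of _ "Pow {1..n} \<times> {1..n}"]) blast+
  have Min: "Min S \<in> S" if "S \<in> Pow {1..n} - {{}}" for S
    using that finite_subset[of S "{1..n}"] by auto
  then have sub: "?min \<subseteq> ?all" by blast
  have "nonmin_pairs n = ?all - ?min"
    using Min by (auto simp: nonmin_pairs_def)
  then have "card (nonmin_pairs n) = card ?all - card ?min"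
    using card_Diff_subset[OF finite_subset[OF sub fin] sub] by simp
  moreover have "card ?min = 2 ^ n - 1"
    by (subst card_image) (auto intro: inj_onI simp: card_Pow)
  ultimately show ?thesis by (simp add: card_member_pairs)
qed

lemma bound_exp_eq: "n \<ge> 1 \<Longrightarrow> bound_exp n = n + card (nonmin_pairs n)"
proof -
  assume n: "n \<ge> 1"
  have "(2::nat) ^ n = 2 * 2 ^ (n - 1)" using n by (cases n) auto
  moreover have "2 * (2::nat) ^ (n - 1) \<le> n * 2 ^ (n - 1) + 1"
  proof (cases "n = 1")
    case False
    then have "2 * (2::nat) ^ (n - 1) \<le> n * 2 ^ (n - 1)" using n by (intro mult_right_mono) auto
    then show ?thesis by linarith
  qed simp
  moreover have "(1::nat) \<le> 2 * 2 ^ (n - 1)" using one_le_power[of "2::nat" "n - 1"] by linarith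
  ultimately show ?thesis unfolding card_nonmin_pairs bound_exp_def by linarith
qed

definition pair_elem :: "nat \<Rightarrow> nat set \<Rightarrow> nat \<Rightarrow> nat \<Rightarrow> (nat \<Rightarrow> nat set set \<times> nat set)" where
  "pair_elem n S m j = (\<lambda>i\<in>{1..n}. if i = m \<or> i = j then ({S}, {}) else ({}, {}))"

lemma pair_elem_carrier:
  "m \<in> S \<Longrightarrow> j \<in> S \<Longrightarrow> S \<subseteq> {1..n} \<Longrightarrow> pair_elem n S m j \<in> carrier (ProdG n)"
  by (auto simp: pair_elem_def ProdG_carrier Gi_mem)

lemma gamma_commutator:
  assumes m: "m \<in> {1..n}" and j: "j \<in> {1..n}" and mj: "m \<noteq> j"
  shows "gamma n m \<otimes>\<^bsub>ProdG n\<^esub> gamma n j \<otimes>\<^bsub>ProdG n\<^esub> gamma n m \<otimes>\<^bsub>ProdG n\<^esub> gamma n j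
    = pair_elem n {m, j} m j"
proof (rule ProdG_eqI)
  interpret P: group "ProdG n" by (rule ProdG_group)
  show "gamma n m \<otimes>\<^bsub>ProdG n\<^esub> gamma n j \<otimes>\<^bsub>ProdG n\<^esub> gamma n m \<otimes>\<^bsub>ProdG n\<^esub> gamma n j \<in> carrier (ProdG n)"
    using gamma_carrier m j by simp
  show "pair_elem n {m, j} m j \<in> carrier (ProdG n)" using pair_elem_carrier m j by auto
  have "act_gen j {{m}} = {{m}, {m, j}}" "act_gen m {{j}} = {{j}, {m, j}}"
    using act_gen_singleton[of j "{m}"] act_gen_singleton[of m "{j}"] mj by (auto simp: insert_commute)
  moreover have "symdiff {{m}} {{m}, {m, j}} = {{m, j}}" "symdiff {{j}, {m, j}} {{j}} = {{m, j}}"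
    "symdiff (symdiff {m} {j}) {m} = {j}"
    using mj by (auto simp: symdiff_def)
  ultimately show "(gamma n m \<otimes>\<^bsub>ProdG n\<^esub> gamma n j \<otimes>\<^bsub>ProdG n\<^esub> gamma n m \<otimes>\<^bsub>ProdG n\<^esub> gamma n j) i
      = pair_elem n {m, j} m j i" if "i \<in> {1..n}" for i
    using that mj
    by (auto simp: ProdG_mult_apply gamma_apply gi_def Gi_mult pair_elem_def finite_symdiff symdiff_commute[of "{}"])
qed

lemma pair_elem_insert:
  assumes k: "k \<in> {1..n}" "k \<notin> S" and S: "m \<in> S" "j \<in> S" "S \<subseteq> {1..n}"
  shows "pair_elem n S m j \<otimes>\<^bsub>ProdG n\<^esub> (gamma n k \<otimes>\<^bsub>ProdG n\<^esub> pair_elem n S m j \<otimes>\<^bsub>ProdG n\<^esub> gamma n k)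
         = pair_elem n (insert k S) m j"
proof (rule ProdG_eqI)
  interpret P: group "ProdG n" by (rule ProdG_group)
  show "pair_elem n S m j \<otimes>\<^bsub>ProdG n\<^esub> (gamma n k \<otimes>\<^bsub>ProdG n\<^esub> pair_elem n S m j \<otimes>\<^bsub>ProdG n\<^esub> gamma n k)
      \<in> carrier (ProdG n)"
    using gamma_carrier[OF k(1)] pair_elem_carrier[OF S] by simp
  show "pair_elem n (insert k S) m j \<in> carrier (ProdG n)" using pair_elem_carrier S k by auto
  have "symdiff {S} (act_gen k {S}) = {insert k S}"
    using act_gen_singleton[OF k(2)] k(2) by (auto simp: symdiff_def)
  then show "(pair_elem n S m j \<otimes>\<^bsub>ProdG n\<^esub> (gamma n k \<otimes>\<^bsub>ProdG n\<^esub> pair_elem n S m j \<otimes>\<^bsub>ProdG n\<^esub> gamma n k)) i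
      = pair_elem n (insert k S) m j i" if "i \<in> {1..n}" for i
    using that k S by (auto simp: ProdG_mult_apply gamma_apply gi_def Gi_mult pair_elem_def)
qed

lemma pair_elem_union_GG:
  assumes "finite T" "T \<subseteq> {1..n} - {m, j}" and m: "m \<in> {1..n}" and j: "j \<in> {1..n}" "m \<noteq> j"
  shows "pair_elem n (T \<union> {m, j}) m j \<in> carrier (GG n)"
  using assms(1,2)
proof (induction T rule: finite_induct)
  case empty
  interpret GG: group "GG n" by (rule GG_group)
  show ?case
    using gamma_commutator[OF m j] gamma_GG[OF m] gamma_GG[OF j(1)] by (metis GG.m_closed GG_mult Un_empty_left)
next
  case (insert k T)
  interpret GG: group "GG n" by (rule GG_group)
  have "pair_elem n (insert k (T \<union> {m, j})) m j = pair_elem n (T \<union> {m, j}) m j \<otimes>\<^bsub>ProdG n\<^esub>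
      (gamma n k \<otimes>\<^bsub>ProdG n\<^esub> pair_elem n (T \<union> {m, j}) m j \<otimes>\<^bsub>ProdG n\<^esub> gamma n k)"
    using insert m j by (intro pair_elem_insert[symmetric]) auto
  moreover have "k \<in> {1..n}" using insert by auto
  ultimately show ?case
    using insert gamma_GG by (metis GG.m_closed GG_mult Un_insert_left subset_insertI2 insert_subset)
qed

lemma pair_elem_GG:
  assumes "m \<in> S" "j \<in> S" "m \<noteq> j" "S \<subseteq> {1..n}"
  shows "pair_elem n S m j \<in> carrier (GG n)"
proof -
  have "finite (S - {m, j})" using assms(4) finite_subset by auto
  then have "pair_elem n ((S - {m, j}) \<union> {m, j}) m j \<in> carrier (GG n)"
    by (rule pair_elem_union_GG) (use assms in auto)
  moreover have "(S - {m, j}) \<union> {m, j} = S" using assms by auto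
  ultimately show ?thesis by (simp only:)
qed

text \<open>The product of the elements \<open>pair_elem n S (Min S) j\<close> over \<open>(S, j) \<in> B\<close>, in closed form
  (see \<open>kernel_elem_insert\<close>): coordinate \<open>i\<close> contains \<open>e_S\<close> iff an odd number of factors
  touches \<open>i\<close>.\<close>

definition kernel_elem :: "nat \<Rightarrow> (nat set \<times> nat) set \<Rightarrow> (nat \<Rightarrow> nat set set \<times> nat set)" where
  "kernel_elem n B =
     (\<lambda>i\<in>{1..n}. ({S. (S, i) \<in> B} \<union> {S. i = Min S \<and> odd (card {j. (S, j) \<in> B})}, {}))"

lemma kernel_elem_empty: "kernel_elem n {} = \<one>\<^bsub>ProdG n\<^esub>"
  by (rule ext) (simp add: kernel_elem_def ProdG_def Gi_one)

lemma kernel_elem_insert: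
  assumes B: "finite B" "B \<subseteq> nonmin_pairs n" and Sj: "(S, j) \<in> nonmin_pairs n" "(S, j) \<notin> B"
  shows "kernel_elem n (insert (S, j) B) = kernel_elem n B \<otimes>\<^bsub>ProdG n\<^esub> pair_elem n S (Min S) j"
proof (rule ext)
  fix i
  let ?e = "if i = Min S \<or> i = j then {S} else {}"
  have "finite {j'. (S, j') \<in> B}"
    by (rule finite_subset[of _ "snd ` B"]) (use B in force)+
  moreover have "{j'. (S, j') \<in> insert (S, j) B} = insert j {j'. (S, j') \<in> B}" by auto
  ultimately have card: "card {j'. (S, j') \<in> insert (S, j) B} = Suc (card {j'. (S, j') \<in> B})"
    using Sj(2) by simp
  have nonmin: "i \<noteq> Min S'" if "(S', i) \<in> insert (S, j) B" for S'
    using that B(2) Sj(1) by (auto simp: nonmin_pairs_def)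
  have coord: "(S' \<in> {T. (T, i) \<in> insert (S, j) B} \<union> {T. i = Min T \<and> odd (card {k. (T, k) \<in> insert (S, j) B})})
      \<longleftrightarrow> S' \<in> symdiff ({T. (T, i) \<in> B} \<union> {T. i = Min T \<and> odd (card {k. (T, k) \<in> B})}) ?e" for S'
  proof (cases "S' = S")
    case True
    have "(S, Min S) \<notin> B" using B(2) by (auto simp: nonmin_pairs_def)
    then show ?thesis using True card Sj(2) nonmin_pairsD(3)[OF Sj(1)] by simp
  qed auto
  show "kernel_elem n (insert (S, j) B) i = (kernel_elem n B \<otimes>\<^bsub>ProdG n\<^esub> pair_elem n S (Min S) j) i"
  proof (cases "i \<in> {1..n}")
    case True
    have "pair_elem n S (Min S) j i = (?e, {})" using True by (simp add: pair_elem_def)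
    then have "(kernel_elem n B \<otimes>\<^bsub>ProdG n\<^esub> pair_elem n S (Min S) j) i
        = (symdiff ({T. (T, i) \<in> B} \<union> {T. i = Min T \<and> odd (card {k. (T, k) \<in> B})}) ?e, {})"
      using True by (simp add: ProdG_mult_apply kernel_elem_def Gi_mult)
    moreover have "kernel_elem n (insert (S, j) B) i = ({T. (T, i) \<in> insert (S, j) B} \<union>
        {T. i = Min T \<and> odd (card {k. (T, k) \<in> insert (S, j) B})}, {})"
      by (simp only: kernel_elem_def restrict_apply'[OF True])
    ultimately show ?thesis using coord by (simp only: prod.inject Set.set_eqI)
  next
    case False
    then show ?thesis by (simp add: kernel_elem_def ProdG_def del: atLeastAtMost_iff)
  qed
qed

lemma kernel_elem_GG:
  assumes "finite B" "B \<subseteq> nonmin_pairs n"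
  shows "kernel_elem n B \<in> carrier (GG n)"
  using assms
proof (induction B rule: finite_induct)
  case empty
  then show ?case using monoid.one_closed[OF group.is_monoid[OF GG_group]] by (simp add: kernel_elem_empty)
next
  case (insert b B)
  interpret GG: group "GG n" by (rule GG_group)
  obtain S j where b: "b = (S, j)" by fastforce
  then have Sj: "(S, j) \<in> nonmin_pairs n" using insert by auto
  have "pair_elem n S (Min S) j \<in> carrier (GG n)"
    using nonmin_pairsD[OF Sj] by (intro pair_elem_GG) auto
  then show ?case
    using insert Sj kernel_elem_insert[of B n S j] GG.m_closed b by auto
qed

lemma kernel_elem_inj:
  assumes "B \<subseteq> nonmin_pairs n" "B' \<subseteq> nonmin_pairs n" "kernel_elem n B = kernel_elem n B'"
  shows "B = B'"
proof -
  have sub: "B1 \<subseteq> B2" if "B1 \<subseteq> nonmin_pairs n" "B2 \<subseteq> nonmin_pairs n" "kernel_elem n B1 = kernel_elem n B2"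
    for B1 B2
  proof
    fix b assume b: "b \<in> B1"
    obtain S i where Si: "b = (S, i)" by fastforce
    then have "(S, i) \<in> nonmin_pairs n" using b that(1) by auto
    note S = nonmin_pairsD[OF this]
    have "S \<in> fst (kernel_elem n B1 i)" using S(6) b Si by (simp add: kernel_elem_def)
    then have "S \<in> fst (kernel_elem n B2 i)" using that(3) by simp
    then show "b \<in> B2" using S Si by (simp add: kernel_elem_def)
  qed
  show ?thesis using sub[OF assms] sub[OF assms(2,1) assms(3)[symmetric]] by (rule equalityI)
qed

lemma kernel_elem_kernel:
  assumes n: "n \<ge> 1" and B: "finite B" "B \<subseteq> nonmin_pairs n"
  shows "kernel_elem n B \<in> kernel (GG n) (Vn n) (gbold n)"
proof -
  have one: "1 \<in> {1..n}" using n by simp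
  have "({1}, j) \<notin> B" for j using B(2) by (auto simp: nonmin_pairs_def)
  then have "{1} \<notin> fst (kernel_elem n B 1)" using one by (simp add: kernel_elem_def)
  then have "gbold n (kernel_elem n B) = {}"
    using gbold_eq[OF kernel_elem_GG[OF B] one] one by (simp add: kernel_elem_def phii_def)
  then show ?thesis using kernel_elem_GG[OF B] by (simp add: kernel_def)
qed

lemma finite_GG: "finite (carrier (GG n))"
proof (rule finite_subset[OF GG_subset_ProdG])
  have "finite (carrier (Gi n i))" for i
  proof -
    have "finite {A. A \<subseteq> {1..n} \<and> i \<in> A}" by (rule finite_subset[of _ "Pow {1..n}"]) auto
    then show ?thesis by (simp add: Gi_def Ucar_def)
  qed
  then show "finite (carrier (ProdG n))" by (simp add: ProdG_carrier finite_PiE)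
qed

lemma gbold_onto:
  assumes n: "n \<ge> 1"
  shows "gbold n ` carrier (GG n) = carrier (Vn n)"
proof
  interpret GG: group "GG n" by (rule GG_group)
  show "gbold n ` carrier (GG n) \<subseteq> carrier (Vn n)"
    by (rule image_subsetI) (rule hom_in_carrier[OF gbold_hom[OF n]])
  have gens: "gamma n i \<in> carrier (GG n) \<and> gbold n (gamma n i) = {i}" if "i \<in> {1..n}" for i
    using that gamma_GG gbold_gamma[OF n] by simp
  have gs: "gamma n ` {1..n} \<subseteq> carrier (GG n)" using gamma_GG by blast
  show "carrier (Vn n) \<subseteq> gbold n ` carrier (GG n)"
  proof
    fix P assume "P \<in> carrier (Vn n)"
    then obtain x where "x \<in> generate (GG n) (gamma n ` {1..n})" "gbold n x = P"
      using GG.Vn_hom_onto_from_generators[OF gbold_hom[OF n] gens] by auto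
    then show "P \<in> gbold n ` carrier (GG n)" using GG.generate_in_carrier[OF gs] by blast
  qed
qed

theorem GG_order_lower: "n \<ge> 1 \<Longrightarrow> 2 ^ bound_exp n \<le> order (GG n)"
proof -
  assume n: "n \<ge> 1"
  interpret GG: group "GG n" by (rule GG_group)
  have onto: "gbold n ` carrier (GG n) = carrier (Vn n)" by (rule gbold_onto[OF n])
  let ?K = "kernel (GG n) (Vn n) (gbold n)"
  have "kernel_elem n ` Pow (nonmin_pairs n) \<subseteq> ?K"
    using kernel_elem_kernel[OF n] finite_nonmin_pairs finite_subset by blast
  moreover have "inj_on (kernel_elem n) (Pow (nonmin_pairs n))"
    by (rule inj_onI) (rule kernel_elem_inj, auto)
  moreover have "finite ?K" using finite_GG by (auto simp: kernel_def)
  ultimately have "2 ^ card (nonmin_pairs n) \<le> card ?K"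
    using card_inj_on_le finite_nonmin_pairs by (metis card_Pow)
  moreover have "order (GG n) = 2 ^ n * card ?K"
    using GG.order_eq_image_kernel[OF gbold_hom[OF n] Vn_group onto] by (simp add: order_def card_Pow)
  ultimately show ?thesis by (simp add: bound_exp_eq[OF n] power_add)
qed

section \<open>Groups with involutions and elementary abelian derived subgroup\<close>

locale exp2_derived = group G for G (structure) +
  fixes n :: nat and g :: "nat \<Rightarrow> 'a"
  assumes gen_carrier: "i \<in> {1..n} \<Longrightarrow> g i \<in> carrier G"
    and gen_square: "i \<in> {1..n} \<Longrightarrow> g i \<otimes> g i = \<one>"
    and derived_square: "x \<in> derived G (carrier G) \<Longrightarrow> x \<otimes> x = \<one>"
begin

abbreviation D where "D \<equiv> derived G (carrier G)"

lemma D_subgroup: "subgroup D G"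
  by (rule derived_is_subgroup) simp

lemma D_carrier: "x \<in> D \<Longrightarrow> x \<in> carrier G"
  by (rule subgroup.mem_carrier[OF D_subgroup])

lemma D_mult: "x \<in> D \<Longrightarrow> y \<in> D \<Longrightarrow> x \<otimes> y \<in> D"
  by (rule subgroup.m_closed[OF D_subgroup])

lemma D_comm: "x \<in> D \<Longrightarrow> y \<in> D \<Longrightarrow> x \<otimes> y = y \<otimes> x"
  by (rule exponent2_subgroup_comm[OF D_subgroup]) (use derived_square in auto)

lemma D_left_commute: "x \<in> D \<Longrightarrow> y \<in> D \<Longrightarrow> z \<in> carrier G \<Longrightarrow> x \<otimes> (y \<otimes> z) = y \<otimes> (x \<otimes> z)"
  using D_comm D_carrier by (metis m_assoc)

lemmas D_ac = m_assoc D_comm D_left_commute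

lemma D_inv: "x \<in> D \<Longrightarrow> inv x = x"
  by (rule inv_involution[OF D_carrier derived_square])

definition invol :: "'a \<Rightarrow> bool" where
  "invol a \<longleftrightarrow> a \<in> carrier G \<and> a \<otimes> a = \<one>"

lemma invol_gen: "i \<in> {1..n} \<Longrightarrow> invol (g i)"
  by (simp add: invol_def gen_carrier gen_square)

lemma invol_carrier: "invol a \<Longrightarrow> a \<in> carrier G"
  by (simp add: invol_def)

lemma invol_inv: "invol a \<Longrightarrow> inv a = a"
  unfolding invol_def by (intro inv_involution) simp_all

lemma invol_cancel: "invol a \<Longrightarrow> x \<in> carrier G \<Longrightarrow> a \<otimes> (a \<otimes> x) = x"
  unfolding invol_def by (simp flip: m_assoc)

lemma commutator_D:
  assumes "invol a" "invol b"
  shows "a \<otimes> b \<otimes> a \<otimes> b \<in> D"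
proof -
  have "a \<otimes> b \<otimes> inv a \<otimes> inv b \<in> D"
    unfolding derived_def by (rule generate.incl) (use assms invol_carrier in auto)
  then show ?thesis using assms invol_inv by simp
qed

definition conj_by :: "'a \<Rightarrow> 'a \<Rightarrow> 'a" where
  "conj_by a d = a \<otimes> d \<otimes> a"

text \<open>The operator \<open>\<delta>_a = 1 + c_a\<close> on the \<open>\<bbbF>_2\<close>-vector space \<open>D\<close>.\<close>

definition delta :: "'a \<Rightarrow> 'a \<Rightarrow> 'a" where
  "delta a d = d \<otimes> conj_by a d"

lemma conj_by_D: "invol a \<Longrightarrow> d \<in> D \<Longrightarrow> conj_by a d \<in> D"
  unfolding conj_by_def using normal.inv_op_closed2[OF derived_self_is_normal] invol_carrier invol_inv
  by metis

lemma delta_D: "invol a \<Longrightarrow> d \<in> D \<Longrightarrow> delta a d \<in> D"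
  unfolding delta_def by (rule D_mult) (auto intro: conj_by_D)

lemma conj_by_mult: "invol a \<Longrightarrow> d \<in> D \<Longrightarrow> e \<in> D \<Longrightarrow> conj_by a (d \<otimes> e) = conj_by a d \<otimes> conj_by a e"
  unfolding conj_by_def using invol_carrier D_carrier invol_cancel by (simp add: m_assoc)

lemma conj_by_conj_by: "invol a \<Longrightarrow> d \<in> D \<Longrightarrow> conj_by a (conj_by a d) = d"
  unfolding conj_by_def using invol_carrier D_carrier invol_cancel by (simp add: m_assoc invol_def)

text \<open>Conjugations by involutions commute on \<open>D\<close>: they differ by conjugation with the commutator
  \<open>abab \<in> D\<close>, which acts trivially on the abelian group \<open>D\<close>.\<close>

lemma conj_by_commute:
  assumes a: "invol a" and b: "invol b" and d: "d \<in> D"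
  shows "conj_by a (conj_by b d) = conj_by b (conj_by a d)"
proof -
  have ac: "a \<in> carrier G" and bc: "b \<in> carrier G" and dc: "d \<in> carrier G"
    using a b d invol_carrier D_carrier by auto
  define e where "e = a \<otimes> b \<otimes> a \<otimes> b"
  define y where "y = conj_by b (conj_by a d)"
  have eD: "e \<in> D" and yD: "y \<in> D"
    unfolding e_def y_def using commutator_D a b conj_by_D d by auto
  have "conj_by a (conj_by b d) = e \<otimes> y \<otimes> inv e"
    unfolding e_def y_def conj_by_def
    using ac bc dc invol_cancel[OF a] invol_cancel[OF b] invol_inv[OF a] invol_inv[OF b]
    by (simp add: m_assoc inv_mult_group)
  also have "\<dots> = y" using D_comm[OF eD yD] eD yD D_carrier by (simp add: m_assoc)
  finally show ?thesis by (simp add: y_def)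
qed

lemma delta_mult: "invol a \<Longrightarrow> d \<in> D \<Longrightarrow> e \<in> D \<Longrightarrow> delta a (d \<otimes> e) = delta a d \<otimes> delta a e"
proof -
  assume a: "invol a" and d: "d \<in> D" and e: "e \<in> D"
  show ?thesis
    unfolding delta_def conj_by_mult[OF a d e]
    using d e conj_by_D[OF a d] conj_by_D[OF a e] by (simp add: D_ac D_carrier)
qed

lemma conj_by_eq_delta: "invol a \<Longrightarrow> d \<in> D \<Longrightarrow> conj_by a d = d \<otimes> delta a d"
  unfolding delta_def using D_carrier conj_by_D derived_square by (simp flip: m_assoc)

lemma delta_delta: "invol a \<Longrightarrow> d \<in> D \<Longrightarrow> delta a (delta a d) = \<one>"
proof -
  assume a: "invol a" and d: "d \<in> D"
  have cd: "conj_by a d \<in> D" by (rule conj_by_D[OF a d])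
  have "delta a (delta a d) = delta a d \<otimes> (conj_by a d \<otimes> d)"
    unfolding delta_def[of a "delta a d"] unfolding delta_def
    using conj_by_mult[OF a d cd] conj_by_conj_by[OF a d] by simp
  also have "\<dots> = delta a d \<otimes> delta a d" using D_comm[OF cd d] by (simp add: delta_def)
  finally show ?thesis using derived_square[OF delta_D[OF a d]] by simp
qed

lemma conj_by_delta_commute:
  "invol a \<Longrightarrow> invol b \<Longrightarrow> d \<in> D \<Longrightarrow> conj_by a (delta b d) = delta b (conj_by a d)"
  unfolding delta_def by (simp add: conj_by_mult conj_by_D conj_by_commute)

lemma delta_commute: "invol a \<Longrightarrow> invol b \<Longrightarrow> d \<in> D \<Longrightarrow> delta a (delta b d) = delta b (delta a d)"
proof -
  assume a: "invol a" and b: "invol b" and d: "d \<in> D"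
  have "delta a (delta b d) = delta b d \<otimes> delta b (conj_by a d)"
    unfolding delta_def[of a "delta b d"] conj_by_delta_commute[OF a b d] ..
  also have "\<dots> = delta b (delta a d)"
    unfolding delta_def[of a d] by (rule delta_mult[symmetric, OF b d conj_by_D[OF a d]])
  finally show ?thesis .
qed

lemma delta_one: "invol a \<Longrightarrow> delta a \<one> = \<one>"
  unfolding delta_def conj_by_def invol_def by simp

text \<open>The two words differ by \<open>c_b c_c c_a q \<cdot> q = \<delta>_a q\<close>, where \<open>q = [b, c]\<close> is fixed by \<open>c_b\<close> and \<open>c_c\<close>.\<close>

lemma word_difference_delta:
  assumes a: "invol a" and b: "invol b" and c: "invol c"
  shows "a \<otimes> c \<otimes> b \<otimes> a \<otimes> b \<otimes> c = (a \<otimes> b \<otimes> c \<otimes> a \<otimes> c \<otimes> b) \<otimes> delta a (b \<otimes> c \<otimes> b \<otimes> c)"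
proof -
  have cs: "a \<in> carrier G" "b \<in> carrier G" "c \<in> carrier G" using a b c invol_carrier by auto
  note canc = invol_cancel[OF a] invol_cancel[OF b] invol_cancel[OF c]
  define q where "q = b \<otimes> c \<otimes> b \<otimes> c"
  have qD: "q \<in> D" unfolding q_def using commutator_D b c by auto
  have q': "c \<otimes> b \<otimes> c \<otimes> b = q"
  proof -
    have "c \<otimes> b \<otimes> c \<otimes> b = inv q" unfolding q_def using cs invol_inv b c by (simp add: m_assoc inv_mult_group)
    then show ?thesis using D_inv[OF qD] by simp
  qed
  have "conj_by c q = c \<otimes> b \<otimes> c \<otimes> b" "conj_by b q = c \<otimes> b \<otimes> c \<otimes> b"
    unfolding q_def conj_by_def using cs canc b c by (simp_all add: m_assoc invol_def)
  then have cq: "conj_by c q = q" and bq: "conj_by b q = q" using q' by simp_all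
  have "a \<otimes> c \<otimes> b \<otimes> a \<otimes> b \<otimes> c =
      (a \<otimes> b \<otimes> c \<otimes> a \<otimes> c \<otimes> b) \<otimes> (conj_by b (conj_by c (conj_by a (c \<otimes> b \<otimes> c \<otimes> b))) \<otimes> q)"
    unfolding q_def conj_by_def using cs canc by (simp add: m_assoc)
  also have "conj_by b (conj_by c (conj_by a (c \<otimes> b \<otimes> c \<otimes> b))) = conj_by a q"
    unfolding q' using conj_by_commute[OF a c qD] conj_by_commute[OF a b conj_by_D[OF c qD]] cq bq by simp
  also have "conj_by a q \<otimes> q = delta a q"
    using D_comm[OF conj_by_D[OF a qD] qD] by (simp add: delta_def)
  finally show ?thesis by (simp add: q_def)
qed

text \<open>With \<open>p = [a, b]\<close> and \<open>r = [a, c]\<close> the two words are \<open>p \<cdot> c_b r\<close> and \<open>r \<cdot> c_c p\<close>.\<close>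

lemma jacobi:
  assumes a: "invol a" and b: "invol b" and c: "invol c"
  shows "delta a (b \<otimes> c \<otimes> b \<otimes> c) = delta b (a \<otimes> c \<otimes> a \<otimes> c) \<otimes> delta c (a \<otimes> b \<otimes> a \<otimes> b)"
proof -
  have cs: "a \<in> carrier G" "b \<in> carrier G" "c \<in> carrier G" using a b c invol_carrier by auto
  note canc = invol_cancel[OF a] invol_cancel[OF b] invol_cancel[OF c]
  define p where "p = a \<otimes> b \<otimes> a \<otimes> b"
  define r where "r = a \<otimes> c \<otimes> a \<otimes> c"
  define \<delta> where "\<delta> = delta a (b \<otimes> c \<otimes> b \<otimes> c)"
  have pD: "p \<in> D" and rD: "r \<in> D" and \<delta>D: "\<delta> \<in> D"
    unfolding p_def r_def \<delta>_def using commutator_D delta_D a b c by auto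
  have cbr: "conj_by b r \<in> D" and ccp: "conj_by c p \<in> D" using conj_by_D b c pD rD by auto
  have "a \<otimes> b \<otimes> c \<otimes> a \<otimes> c \<otimes> b = p \<otimes> conj_by b r" "a \<otimes> c \<otimes> b \<otimes> a \<otimes> b \<otimes> c = r \<otimes> conj_by c p"
    unfolding p_def r_def conj_by_def using cs canc by (simp_all add: m_assoc)
  then have "r \<otimes> conj_by c p = p \<otimes> conj_by b r \<otimes> \<delta>"
    using word_difference_delta[OF a b c] by (simp add: \<delta>_def)
  then have "(p \<otimes> conj_by b r) \<otimes> (r \<otimes> conj_by c p) = ((p \<otimes> conj_by b r) \<otimes> (p \<otimes> conj_by b r)) \<otimes> \<delta>"
    using pD cbr \<delta>D D_carrier by (simp add: m_assoc)
  then have "\<delta> = (p \<otimes> conj_by b r) \<otimes> (r \<otimes> conj_by c p)"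
    using derived_square[OF D_mult[OF pD cbr]] \<delta>D D_carrier by simp
  also have "\<dots> = delta b r \<otimes> delta c p"
    unfolding delta_def using pD rD cbr ccp by (simp add: D_ac D_carrier)
  finally show ?thesis unfolding p_def r_def \<delta>_def .
qed

definition gen_comm :: "nat \<Rightarrow> nat \<Rightarrow> 'a" where
  "gen_comm i j = g i \<otimes> g j \<otimes> g i \<otimes> g j"

lemma gen_comm_D: "i \<in> {1..n} \<Longrightarrow> j \<in> {1..n} \<Longrightarrow> gen_comm i j \<in> D"
  unfolding gen_comm_def by (rule commutator_D) (simp_all add: invol_gen)

lemma gen_comm_sym: "i \<in> {1..n} \<Longrightarrow> j \<in> {1..n} \<Longrightarrow> gen_comm j i = gen_comm i j"
proof -
  assume i: "i \<in> {1..n}" and j: "j \<in> {1..n}"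
  have "inv (gen_comm i j) = gen_comm j i" unfolding gen_comm_def
    using gen_carrier[OF i] gen_carrier[OF j] invol_inv[OF invol_gen[OF i]] invol_inv[OF invol_gen[OF j]]
    by (simp add: m_assoc inv_mult_group)
  then show ?thesis using D_inv[OF gen_comm_D[OF i j]] by simp
qed

lemma delta_gen_comm_self: "i \<in> {1..n} \<Longrightarrow> j \<in> {1..n} \<Longrightarrow> delta (g i) (gen_comm i j) = \<one>"
proof -
  assume i: "i \<in> {1..n}" and j: "j \<in> {1..n}"
  have "conj_by (g i) (gen_comm i j) = gen_comm j i" unfolding conj_by_def gen_comm_def
    using gen_carrier[OF i] gen_carrier[OF j] invol_cancel[OF invol_gen[OF i]] by (simp add: m_assoc)
  then show ?thesis
    using gen_comm_sym[OF i j] derived_square[OF gen_comm_D[OF i j]] by (simp add: delta_def)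
qed

lemma jacobi_gen_comm:
  assumes "i \<in> {1..n}" "m \<in> {1..n}" "j \<in> {1..n}"
  shows "delta (g i) (gen_comm m j) = delta (g m) (gen_comm i j) \<otimes> delta (g j) (gen_comm i m)"
  unfolding gen_comm_def using jacobi[OF invol_gen invol_gen invol_gen] assms by blast

definition delta_list :: "nat list \<Rightarrow> 'a \<Rightarrow> 'a" where
  "delta_list xs d = foldr (\<lambda>t. delta (g t)) xs d"

definition delta_set :: "nat set \<Rightarrow> 'a \<Rightarrow> 'a" where
  "delta_set T d = delta_list (sorted_list_of_set T) d"

lemma delta_list_simps [simp]:
  "delta_list [] d = d" "delta_list (t # xs) d = delta (g t) (delta_list xs d)"
  by (simp_all add: delta_list_def)

lemma delta_list_append: "delta_list (xs @ ys) d = delta_list xs (delta_list ys d)"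
  by (simp add: delta_list_def)

lemma delta_list_D: "set xs \<subseteq> {1..n} \<Longrightarrow> d \<in> D \<Longrightarrow> delta_list xs d \<in> D"
  by (induction xs) (simp_all add: delta_D[OF invol_gen])

lemma delta_list_mult:
  "set xs \<subseteq> {1..n} \<Longrightarrow> d \<in> D \<Longrightarrow> e \<in> D \<Longrightarrow> delta_list xs (d \<otimes> e) = delta_list xs d \<otimes> delta_list xs e"
  by (induction xs) (auto simp: delta_mult[OF invol_gen] delta_list_D)

lemma delta_list_one: "set xs \<subseteq> {1..n} \<Longrightarrow> delta_list xs \<one> = \<one>"
  by (induction xs) (auto simp: delta_one[OF invol_gen])

lemma delta_list_commute:
  "set xs \<subseteq> {1..n} \<Longrightarrow> i \<in> {1..n} \<Longrightarrow> d \<in> D \<Longrightarrow> delta (g i) (delta_list xs d) = delta_list xs (delta (g i) d)"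
  by (induction xs) (auto simp: delta_commute[OF invol_gen invol_gen] delta_list_D)

lemma delta_list_insort:
  "set xs \<subseteq> {1..n} \<Longrightarrow> t \<in> {1..n} \<Longrightarrow> d \<in> D \<Longrightarrow> delta_list (insort t xs) d = delta (g t) (delta_list xs d)"
  by (induction xs) (auto simp: delta_commute[OF invol_gen invol_gen] delta_list_D)

text \<open>Iterated \<open>\<delta>\<close>'s vanish as soon as an index repeats, since they commute and \<open>\<delta>_a \<delta>_a = 0\<close>.\<close>

lemma delta_list_long: "set xs \<subseteq> {1..n} \<Longrightarrow> n < length xs \<Longrightarrow> k \<in> D \<Longrightarrow> delta_list xs k = \<one>"
proof -
  assume xs: "set xs \<subseteq> {1..n}" and len: "n < length xs" and k: "k \<in> D"
  have "card (set xs) \<le> n" using card_mono[OF _ xs] by simp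
  then have "\<not> distinct xs" using len distinct_card by fastforce
  then obtain as y bs cs where e: "xs = as @ [y] @ bs @ [y] @ cs" using not_distinct_decomp by blast
  have y: "y \<in> {1..n}" and sets: "set as \<subseteq> {1..n}" "set bs \<subseteq> {1..n}" "set cs \<subseteq> {1..n}"
    using xs e by auto
  have c: "delta_list cs k \<in> D" using delta_list_D[OF sets(3) k] .
  have "delta_list xs k = delta_list as (delta (g y) (delta_list bs (delta (g y) (delta_list cs k))))"
    using e by (simp add: delta_list_append)
  also have "delta_list bs (delta (g y) (delta_list cs k)) = delta (g y) (delta_list bs (delta_list cs k))"
    using delta_list_commute[OF sets(2) y c] by simp
  also have "delta (g y) (delta (g y) (delta_list bs (delta_list cs k))) = \<one>"
    by (rule delta_delta[OF invol_gen[OF y] delta_list_D[OF sets(2) c]])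
  finally show ?thesis using delta_list_one[OF sets(1)] by simp
qed

lemma set_sorted_list_of_subset: "T \<subseteq> {1..n} \<Longrightarrow> set (sorted_list_of_set T) \<subseteq> {1..n}"
  using finite_subset[of T "{1..n}"] by simp

lemma delta_set_empty [simp]: "delta_set {} d = d"
  by (simp add: delta_set_def)

lemma delta_set_D: "T \<subseteq> {1..n} \<Longrightarrow> d \<in> D \<Longrightarrow> delta_set T d \<in> D"
  unfolding delta_set_def by (rule delta_list_D[OF set_sorted_list_of_subset])

lemma delta_set_mult: "T \<subseteq> {1..n} \<Longrightarrow> d \<in> D \<Longrightarrow> e \<in> D \<Longrightarrow> delta_set T (d \<otimes> e) = delta_set T d \<otimes> delta_set T e"
  unfolding delta_set_def by (rule delta_list_mult[OF set_sorted_list_of_subset])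

lemma delta_set_one: "T \<subseteq> {1..n} \<Longrightarrow> delta_set T \<one> = \<one>"
  unfolding delta_set_def by (rule delta_list_one[OF set_sorted_list_of_subset])

lemma delta_set_commute:
  "T \<subseteq> {1..n} \<Longrightarrow> i \<in> {1..n} \<Longrightarrow> d \<in> D \<Longrightarrow> delta (g i) (delta_set T d) = delta_set T (delta (g i) d)"
  unfolding delta_set_def by (rule delta_list_commute[OF set_sorted_list_of_subset])

lemma delta_set_insert:
  assumes "T \<subseteq> {1..n}" "t \<in> {1..n}" "t \<notin> T" "d \<in> D"
  shows "delta_set (insert t T) d = delta (g t) (delta_set T d)"
proof -
  have "sorted_list_of_set (insert t T) = insort t (sorted_list_of_set T)"
    using assms finite_subset[of T "{1..n}"] by (simp add: sorted_list_of_set_insert)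
  then show ?thesis
    unfolding delta_set_def using delta_list_insort[OF set_sorted_list_of_subset] assms by simp
qed

lemma delta_set_absorb:
  assumes T: "T \<subseteq> {1..n}" and i: "i \<in> T" and d: "d \<in> D"
  shows "delta (g i) (delta_set T d) = \<one>"
proof -
  have i': "i \<in> {1..n}" and T': "T - {i} \<subseteq> {1..n}" using T i by auto
  have "delta_set T d = delta (g i) (delta_set (T - {i}) d)"
    using delta_set_insert[OF T' i' _ d] insert_Diff[OF i] by simp
  then show ?thesis using delta_delta[OF invol_gen[OF i'] delta_set_D[OF T' d]] by simp
qed

section \<open>The order of an expansion group from above\<close>

definition basis_elem :: "nat set \<times> nat \<Rightarrow> 'a" where
  "basis_elem x = delta_set (fst x - {Min (fst x), snd x}) (gen_comm (Min (fst x)) (snd x))"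

abbreviation basis_span where "basis_span \<equiv> generate G (basis_elem ` nonmin_pairs n)"

lemma Min_insert_nonmin_pairs: "(S, j) \<in> nonmin_pairs n \<Longrightarrow> Min (insert i S) = min i (Min S)"
  using nonmin_pairsD(4,5)[of S j n] by (intro Min_insert) auto

lemma basis_elem_D: "x \<in> nonmin_pairs n \<Longrightarrow> basis_elem x \<in> D"
  unfolding basis_elem_def using nonmin_pairsD[of "fst x" "snd x"]
  by (intro delta_set_D gen_comm_D) auto

lemma basis_elem_span: "x \<in> nonmin_pairs n \<Longrightarrow> basis_elem x \<in> basis_span"
  by (rule generate.incl) (rule imageI)

lemma card_basis_span: "finite basis_span \<and> card basis_span \<le> 2 ^ card (nonmin_pairs n)"
proof -
  have "finite basis_span \<and> card basis_span \<le> 2 ^ card (basis_elem ` nonmin_pairs n)"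
    using basis_elem_D D_carrier D_comm derived_square finite_nonmin_pairs
    by (intro card_generate_commuting_involutions) auto
  moreover have "card (basis_elem ` nonmin_pairs n) \<le> card (nonmin_pairs n)"
    by (rule card_image_le[OF finite_nonmin_pairs])
  ultimately show ?thesis using power_increasing[of _ _ "2::nat"] by (meson le_trans one_le_numeral)
qed

lemma delta_basis_elem_inside:
  assumes x: "(S, j) \<in> nonmin_pairs n" and i: "i \<in> S"
  shows "delta (g i) (basis_elem (S, j)) = \<one>"
proof -
  note P = nonmin_pairsD[OF x]
  let ?T = "S - {Min S, j}"
  have T: "?T \<subseteq> {1..n}" and c: "gen_comm (Min S) j \<in> D" using P gen_comm_D by auto
  show ?thesis
  proof (cases "i \<in> ?T")
    case True
    then show ?thesis unfolding basis_elem_def using delta_set_absorb[OF T True c] by simp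
  next
    case False
    then have "i = Min S \<or> i = j" using i by blast
    then have "delta (g i) (gen_comm (Min S) j) = \<one>"
      using delta_gen_comm_self P gen_comm_sym by (metis (no_types))
    then show ?thesis
      unfolding basis_elem_def using delta_set_commute[OF T _ c] delta_set_one[OF T] i P by auto
  qed
qed

lemma delta_basis_elem_above_min:
  assumes x: "(S, j) \<in> nonmin_pairs n" and i: "i \<in> {1..n}" "i \<notin> S" "Min S < i"
  shows "delta (g i) (basis_elem (S, j)) = basis_elem (insert i S, j)"
proof -
  note P = nonmin_pairsD[OF x]
  let ?T = "S - {Min S, j}"
  have "Min (insert i S) = Min S" using i Min_insert_nonmin_pairs[OF x] by simp
  moreover have "insert i S - {Min S, j} = insert i ?T" using i P by auto
  moreover have "delta_set (insert i ?T) (gen_comm (Min S) j) = delta (g i) (delta_set ?T (gen_comm (Min S) j))"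
    by (rule delta_set_insert) (use P i gen_comm_D in auto)
  ultimately show ?thesis unfolding basis_elem_def by simp
qed

text \<open>Below the minimum the Jacobi identity is needed to move \<open>\<delta>_i\<close> into the commutator.\<close>

lemma delta_basis_elem_below_min:
  assumes x: "(S, j) \<in> nonmin_pairs n" and i: "i \<in> {1..n}" "i \<notin> S" "i < Min S"
  shows "delta (g i) (basis_elem (S, j)) = basis_elem (insert i S, j) \<otimes> basis_elem (insert i S, Min S)"
proof -
  note P = nonmin_pairsD[OF x]
  define m where "m = Min S"
  define T where "T = S - {m, j}"
  have T: "T \<subseteq> {1..n}" "m \<notin> T" "j \<notin> T" "i \<notin> T" using P i by (auto simp: T_def)
  have m: "m \<in> {1..n}" "j \<noteq> m" using P by (auto simp: m_def)
  have min: "Min (insert i S) = i" using i Min_insert_nonmin_pairs[OF x] by (simp add: m_def)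
  have c: "gen_comm i j \<in> D" "gen_comm i m \<in> D" "gen_comm m j \<in> D" using gen_comm_D i P m by auto
  have "insert i S - {i, j} = insert m T" "insert i S - {i, m} = insert j T"
    using i P m by (auto simp: T_def m_def)
  then have b1: "basis_elem (insert i S, j) = delta (g m) (delta_set T (gen_comm i j))"
    and b2: "basis_elem (insert i S, m) = delta (g j) (delta_set T (gen_comm i m))"
    unfolding basis_elem_def using min delta_set_insert T m P c by simp_all
  have "delta (g i) (basis_elem (S, j)) = delta_set T (delta (g i) (gen_comm m j))"
    unfolding basis_elem_def using delta_set_commute[OF T(1) i(1) c(3)] by (simp add: T_def m_def)
  also have "\<dots> = delta_set T (delta (g m) (gen_comm i j)) \<otimes> delta_set T (delta (g j) (gen_comm i m))"
    using jacobi_gen_comm[OF i(1) m(1) P(6)] delta_set_mult[OF T(1)] delta_D invol_gen m P c by simp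
  also have "\<dots> = basis_elem (insert i S, j) \<otimes> basis_elem (insert i S, m)"
    unfolding b1 b2 using delta_set_commute[OF T(1)] m P c by simp
  finally show ?thesis by (simp add: m_def)
qed

lemma delta_basis_elem_span:
  assumes x: "(S, j) \<in> nonmin_pairs n" and i: "i \<in> {1..n}"
  shows "delta (g i) (basis_elem (S, j)) \<in> basis_span"
proof -
  note P = nonmin_pairsD[OF x]
  consider "i \<in> S" | "i \<notin> S" "Min S < i" | "i \<notin> S" "i < Min S"
    using P by (metis linorder_neqE_nat)
  then show ?thesis
  proof cases
    case 1
    then show ?thesis using delta_basis_elem_inside[OF x] generate.one by metis
  next
    case 2
    have "(insert i S, j) \<in> nonmin_pairs n"
      using 2 i P Min_insert_nonmin_pairs[OF x] by (auto simp: nonmin_pairs_def)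
    then show ?thesis using delta_basis_elem_above_min[OF x i 2] basis_elem_span by simp
  next
    case 3
    have "(insert i S, j) \<in> nonmin_pairs n" "(insert i S, Min S) \<in> nonmin_pairs n"
      using 3 i P Min_insert_nonmin_pairs[OF x] by (auto simp: nonmin_pairs_def)
    then show ?thesis
      using delta_basis_elem_below_min[OF x i 3] basis_elem_span generate.eng by metis
  qed
qed

lemma conj_basis_elem_span:
  assumes "x \<in> nonmin_pairs n" "i \<in> {1..n}"
  shows "g i \<otimes> basis_elem x \<otimes> g i \<in> basis_span"
proof -
  obtain S j where x: "x = (S, j)" by fastforce
  have "g i \<otimes> basis_elem x \<otimes> g i = basis_elem x \<otimes> delta (g i) (basis_elem x)"
    using conj_by_eq_delta[OF invol_gen basis_elem_D] assms by (simp add: conj_by_def)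
  then show ?thesis
    using generate.eng[OF basis_elem_span delta_basis_elem_span] assms x by simp
qed

lemma gen_comm_span:
  assumes i: "i \<in> {1..n}" and j: "j \<in> {1..n}" and ij: "i \<noteq> j"
  shows "gen_comm i j \<in> basis_span"
proof -
  have "gen_comm (min i j) (max i j) = basis_elem ({i, j}, max i j)"
    using ij by (auto simp: basis_elem_def min_def max_def)
  moreover have "({i, j}, max i j) \<in> nonmin_pairs n" using i j ij by (auto simp: nonmin_pairs_def min_def max_def)
  moreover have "gen_comm (min i j) (max i j) = gen_comm i j" using gen_comm_sym i j by (auto simp: min_def max_def)
  ultimately show ?thesis using basis_elem_span by metis
qed

text \<open>Adding the generators one at a time at most doubles the subgroup, since each \<open>g_r\<close>
  normalises the span of the basis and the earlier generators.\<close>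

lemma card_generate_basis_gens:
  "r \<le> n \<Longrightarrow> finite (generate G (basis_elem ` nonmin_pairs n \<union> g ` {1..r})) \<and>
     card (generate G (basis_elem ` nonmin_pairs n \<union> g ` {1..r})) \<le> 2 ^ r * 2 ^ card (nonmin_pairs n)"
proof (induction r)
  case 0
  then show ?case using card_basis_span by simp
next
  case (Suc r)
  let ?A = "basis_elem ` nonmin_pairs n \<union> g ` {1..r}"
  have r: "r \<le> n" and a: "Suc r \<in> {1..n}" using Suc by auto
  have A: "?A \<subseteq> carrier G" using basis_elem_D D_carrier gen_carrier r by auto
  have span: "basis_span \<subseteq> generate G ?A" by (rule mono_generate) blast
  have conj: "\<forall>x\<in>?A. g (Suc r) \<otimes> x \<otimes> g (Suc r) \<in> generate G ?A"
  proof
    fix x assume x: "x \<in> ?A"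
    show "g (Suc r) \<otimes> x \<otimes> g (Suc r) \<in> generate G ?A"
    proof (cases "x \<in> basis_elem ` nonmin_pairs n")
      case True
      then show ?thesis using conj_basis_elem_span[OF _ a] span by auto
    next
      case False
      then obtain l where l: "l \<in> {1..r}" "x = g l" using x by blast
      have l': "l \<in> {1..n}" "l \<noteq> Suc r" using l r by auto
      have "g (Suc r) \<otimes> g l \<otimes> g (Suc r) = g l \<otimes> gen_comm l (Suc r)"
        unfolding gen_comm_def using gen_carrier[OF a] gen_carrier[OF l'(1)] invol_cancel[OF invol_gen[OF l'(1)]]
        by (simp add: m_assoc)
      moreover have "g l \<in> generate G ?A" using l by (auto intro: generate.incl)
      ultimately show ?thesis using l gen_comm_span[OF l'(1) a l'(2)] span generate.eng by fastforce
    qed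
  qed
  have "{1..Suc r} = insert (Suc r) {1..r}" by auto
  then have "basis_elem ` nonmin_pairs n \<union> g ` {1..Suc r} = insert (g (Suc r)) ?A" by auto
  moreover have "finite (generate G (insert (g (Suc r)) ?A)) \<and>
      card (generate G (insert (g (Suc r)) ?A)) \<le> 2 * card (generate G ?A)"
    using card_generate_insert_involution[OF A gen_carrier[OF a] gen_square[OF a] conj] Suc.IH[OF r] by blast
  ultimately show ?case using Suc.IH[OF r] by simp
qed

theorem card_bound:
  assumes n: "n \<ge> 1" and gen: "carrier G \<subseteq> generate G (g ` {1..n})"
  shows "finite (carrier G) \<and> order G \<le> 2 ^ bound_exp n"
proof -
  let ?H = "generate G (basis_elem ` nonmin_pairs n \<union> g ` {1..n})"
  have "generate G (g ` {1..n}) \<subseteq> ?H" by (rule mono_generate) blast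
  then have sub: "carrier G \<subseteq> ?H" using gen by blast
  moreover have "finite ?H \<and> card ?H \<le> 2 ^ n * 2 ^ card (nonmin_pairs n)"
    using card_generate_basis_gens by simp
  ultimately show ?thesis
    using card_mono[of ?H "carrier G"] finite_subset bound_exp_eq[OF n]
    by (auto simp: order_def power_add)
qed

end

section \<open>The free group and \<open>\<C>([n])\<close>\<close>

definition flip_letter :: "bool \<times> nat \<Rightarrow> bool \<times> nat" where "flip_letter l = (\<not> fst l, snd l)"

lemma cancels_iff: "cancels l m \<longleftrightarrow> m = flip_letter l"
  by (cases l; cases m) (auto simp: cancels_def flip_letter_def)

lemma cancels_flip_letter [simp]: "cancels l (flip_letter l)" "cancels (flip_letter l) l"
  by (auto simp: cancels_def flip_letter_def)

lemma snd_flip_letter [simp]: "snd (flip_letter l) = snd l"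
  by (simp add: flip_letter_def)

lemma reduced_Cons: "reduced (l # ws) \<longleftrightarrow> reduced ws \<and> (ws = [] \<or> \<not> cancels l (hd ws))"
  by (cases ws) auto

lemma reduced_tl: "reduced (l # ws) \<Longrightarrow> reduced ws"
  by (simp add: reduced_Cons)

lemma cons_red_reduced: "reduced w \<Longrightarrow> reduced (cons_red l w)"
  by (cases w) (auto simp: reduced_Cons)

lemma cons_red_noncancel: "reduced (l # w) \<Longrightarrow> cons_red l w = l # w"
  by (cases w) (auto simp: reduced_Cons)

lemma cons_red_cancel: "reduced w \<Longrightarrow> cancels l m \<Longrightarrow> cons_red l (cons_red m w) = w"
proof (cases w)
  case Nil
  assume "cancels l m"
  then show ?thesis using Nil by (simp add: cancels_def)
next
  case (Cons y ys)
  assume r: "reduced w" and c: "cancels l m"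
  show ?thesis
  proof (cases "cancels m y")
    case True
    then have "y = l" using c by (auto simp: cancels_iff flip_letter_def prod_eq_iff)
    have "cons_red m w = ys" using Cons True by simp
    moreover have "cons_red l ys = l # ys"
      using r Cons \<open>y = l\<close> by (simp add: cons_red_noncancel)
    ultimately show ?thesis using Cons \<open>y = l\<close> by simp
  next
    case False
    then show ?thesis using Cons c by simp
  qed
qed

lemma cons_red_letters: "snd ` set (cons_red l w) \<subseteq> insert (snd l) (snd ` set w)"
  by (cases w) auto

abbreviation word_mult :: "(bool \<times> nat) list \<Rightarrow> (bool \<times> nat) list \<Rightarrow> (bool \<times> nat) list" where
  "word_mult v w \<equiv> foldr cons_red v w"

lemma word_mult_reduced: "reduced w \<Longrightarrow> reduced (word_mult v w)"
  by (induction v) (auto simp: cons_red_reduced)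

lemma word_mult_letters: "snd ` set (word_mult v w) \<subseteq> snd ` set v \<union> snd ` set w"
proof (induction v)
  case (Cons l v)
  then show ?case using cons_red_letters[of l "word_mult v w"] by force
qed simp

lemma word_mult_cons_red: "reduced v \<Longrightarrow> reduced w \<Longrightarrow> word_mult (cons_red l v) w = cons_red l (word_mult v w)"
proof (cases v)
  case Nil then show ?thesis by simp
next
  case (Cons m ms)
  assume rv: "reduced v" and rw: "reduced w"
  show ?thesis
  proof (cases "cancels l m")
    case True
    have "reduced ms" using rv Cons reduced_tl by blast
    then have "reduced (word_mult ms w)" using rw word_mult_reduced by blast
    then show ?thesis using True Cons cons_red_cancel by simp
  next
    case False
    then show ?thesis using Cons by simp
  qed
qed

lemma word_mult_assoc: "reduced u \<Longrightarrow> reduced v \<Longrightarrow> reduced w \<Longrightarrow> word_mult (word_mult u v) w = word_mult u (word_mult v w)"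
proof (induction u)
  case Nil then show ?case by simp
next
  case (Cons l us)
  have rus: "reduced us" using Cons reduced_tl by blast
  have "word_mult (word_mult (l # us) v) w = word_mult (cons_red l (word_mult us v)) w" by simp
  also have "\<dots> = cons_red l (word_mult (word_mult us v) w)"
    by (rule word_mult_cons_red) (use Cons rus word_mult_reduced in auto)
  also have "\<dots> = cons_red l (word_mult us (word_mult v w))" using Cons rus by simp
  finally show ?case by simp
qed

definition word_inv :: "(bool \<times> nat) list \<Rightarrow> (bool \<times> nat) list" where
  "word_inv w = rev (map flip_letter w)"

lemma reduced_snoc: "reduced (xs @ [x]) \<longleftrightarrow> reduced xs \<and> (xs = [] \<or> \<not> cancels (last xs) x)"
proof (induction xs)
  case Nil then show ?case by simp
next
  case (Cons y ys)
  show ?case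
  proof (cases ys)
    case Nil then show ?thesis by simp
  next
    case (Cons z zs)
    then show ?thesis using Cons.IH by (auto simp: reduced_Cons)
  qed
qed

lemma cancels_flip_letter_iff: "cancels (flip_letter a) (flip_letter b) \<longleftrightarrow> cancels b a"
  by (auto simp: cancels_def flip_letter_def)

lemma word_inv_reduced: "reduced w \<Longrightarrow> reduced (word_inv w)"
proof (induction w)
  case Nil then show ?case by (simp add: word_inv_def)
next
  case (Cons l ws)
  have rws: "reduced ws" using Cons reduced_tl by blast
  have "word_inv (l # ws) = word_inv ws @ [flip_letter l]" by (simp add: word_inv_def)
  moreover have "word_inv ws = [] \<or> \<not> cancels (last (word_inv ws)) (flip_letter l)"
  proof (cases ws)
    case Nil then show ?thesis by (simp add: word_inv_def)
  next
    case (Cons m ms)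
    have "last (word_inv ws) = flip_letter m" using Cons by (simp add: word_inv_def)
    moreover have "\<not> cancels l m" using \<open>reduced (l # ws)\<close> Cons by simp
    ultimately show ?thesis using cancels_flip_letter_iff by simp
  qed
  ultimately show ?case using Cons.IH[OF rws] by (simp add: reduced_snoc)
qed

lemma word_inv_letters: "snd ` set (word_inv w) = snd ` set w"
  by (simp add: word_inv_def image_image)

lemma word_inv_mult: "reduced w \<Longrightarrow> word_mult (word_inv w) w = []"
proof (induction w)
  case Nil then show ?case by (simp add: word_inv_def)
next
  case (Cons l ws)
  have rws: "reduced ws" using Cons reduced_tl by blast
  have "word_mult (word_inv (l # ws)) (l # ws) = word_mult (word_inv ws) (cons_red (flip_letter l) (l # ws))"
    by (simp add: word_inv_def)
  also have "cons_red (flip_letter l) (l # ws) = ws" by simp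
  finally show ?case using Cons.IH[OF rws] by simp
qed

lemma FreeGrp_carrier: "w \<in> carrier (FreeGrp n) \<longleftrightarrow> reduced w \<and> snd ` set w \<subseteq> {1..n}"
  by (simp add: FreeGrp_def)

lemma FreeGrp_mult: "v \<otimes>\<^bsub>FreeGrp n\<^esub> w = word_mult v w"
  by (simp add: FreeGrp_def)

lemma FreeGrp_one: "\<one>\<^bsub>FreeGrp n\<^esub> = []"
  by (simp add: FreeGrp_def)

lemma FreeGrp_group: "group (FreeGrp n)"
proof (rule groupI)
  fix x y assume x: "x \<in> carrier (FreeGrp n)" and y: "y \<in> carrier (FreeGrp n)"
  then show "x \<otimes>\<^bsub>FreeGrp n\<^esub> y \<in> carrier (FreeGrp n)"
  proof -
    have "snd ` set (word_mult x y) \<subseteq> {1..n}"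
      using word_mult_letters[of x y] x y unfolding FreeGrp_carrier by (meson Un_least subset_trans)
    then show ?thesis using word_mult_reduced x y by (simp add: FreeGrp_carrier FreeGrp_mult)
  qed
next
  show "\<one>\<^bsub>FreeGrp n\<^esub> \<in> carrier (FreeGrp n)" by (simp add: FreeGrp_carrier FreeGrp_one)
next
  fix x y z assume "x \<in> carrier (FreeGrp n)" "y \<in> carrier (FreeGrp n)" "z \<in> carrier (FreeGrp n)"
  then show "x \<otimes>\<^bsub>FreeGrp n\<^esub> y \<otimes>\<^bsub>FreeGrp n\<^esub> z = x \<otimes>\<^bsub>FreeGrp n\<^esub> (y \<otimes>\<^bsub>FreeGrp n\<^esub> z)"
    by (simp add: FreeGrp_carrier FreeGrp_mult word_mult_assoc)
next
  fix x assume "x \<in> carrier (FreeGrp n)"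
  then show "\<one>\<^bsub>FreeGrp n\<^esub> \<otimes>\<^bsub>FreeGrp n\<^esub> x = x" by (simp add: FreeGrp_mult FreeGrp_one)
next
  fix x assume x: "x \<in> carrier (FreeGrp n)"
  have "word_inv x \<in> carrier (FreeGrp n)" using x word_inv_reduced word_inv_letters by (simp add: FreeGrp_carrier)
  moreover have "word_inv x \<otimes>\<^bsub>FreeGrp n\<^esub> x = \<one>\<^bsub>FreeGrp n\<^esub>"
    using x word_inv_mult by (simp add: FreeGrp_carrier FreeGrp_mult FreeGrp_one)
  ultimately show "\<exists>y\<in>carrier (FreeGrp n). y \<otimes>\<^bsub>FreeGrp n\<^esub> x = \<one>\<^bsub>FreeGrp n\<^esub>" by blast
qed

lemma xgen_carrier: "i \<in> {1..n} \<Longrightarrow> xgen i \<in> carrier (FreeGrp n)"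
  by (simp add: xgen_def FreeGrp_carrier)

lemma FreeGrp_inv_letter: "a \<in> {1..n} \<Longrightarrow> inv\<^bsub>FreeGrp n\<^esub> (xgen a) = [(True, a)]"
proof -
  assume a: "a \<in> {1..n}"
  interpret F: group "FreeGrp n" by (rule FreeGrp_group)
  show ?thesis
  proof (rule F.inv_equality)
    show "[(True, a)] \<otimes>\<^bsub>FreeGrp n\<^esub> xgen a = \<one>\<^bsub>FreeGrp n\<^esub>"
      by (simp add: FreeGrp_mult FreeGrp_one xgen_def cancels_def)
    show "xgen a \<in> carrier (FreeGrp n)" using xgen_carrier[OF a] .
    show "[(True, a)] \<in> carrier (FreeGrp n)" using a by (simp add: FreeGrp_carrier)
  qed
qed

lemma FreeGrp_generated: "carrier (FreeGrp n) \<subseteq> generate (FreeGrp n) (xgen ` {1..n})"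
proof
  interpret F: group "FreeGrp n" by (rule FreeGrp_group)
  fix w assume "w \<in> carrier (FreeGrp n)"
  then show "w \<in> generate (FreeGrp n) (xgen ` {1..n})"
  proof (induction w)
    case Nil
    then show ?case using generate.one[of "FreeGrp n"] by (simp add: FreeGrp_one)
  next
    case (Cons l ws)
    obtain b a where l: "l = (b, a)" by fastforce
    have a: "a \<in> {1..n}" using Cons l by (simp add: FreeGrp_carrier)
    have ws: "ws \<in> carrier (FreeGrp n)" using Cons.prems reduced_tl[of l ws] by (auto simp: FreeGrp_carrier)
    have e: "l # ws = [l] \<otimes>\<^bsub>FreeGrp n\<^esub> ws"
      using Cons cons_red_noncancel by (simp add: FreeGrp_mult FreeGrp_carrier)
    have "[l] \<in> generate (FreeGrp n) (xgen ` {1..n})"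
    proof (cases b)
      case True
      have "[l] = inv\<^bsub>FreeGrp n\<^esub> (xgen a)" using FreeGrp_inv_letter[OF a] l True by simp
      then show ?thesis using a by (metis generate.inv imageI)
    next
      case False
      then have "[l] = xgen a" using l by (simp add: xgen_def)
      then show ?thesis using a by (metis generate.incl imageI)
    qed
    then show ?case using e Cons.IH[OF ws] generate.eng by metis
  qed
qed

context group
begin

definition eval_letter :: "(nat \<Rightarrow> 'a) \<Rightarrow> bool \<times> nat \<Rightarrow> 'a" where
  "eval_letter h l = (if fst l then inv (h (snd l)) else h (snd l))"

definition eval_word :: "(nat \<Rightarrow> 'a) \<Rightarrow> (bool \<times> nat) list \<Rightarrow> 'a" where
  "eval_word h w = foldr (\<lambda>l acc. eval_letter h l \<otimes> acc) w \<one>"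

lemma eval_letter_carrier: "h (snd l) \<in> carrier G \<Longrightarrow> eval_letter h l \<in> carrier G"
  by (simp add: eval_letter_def)

lemma eval_word_Cons [simp]: "eval_word h (l # w) = eval_letter h l \<otimes> eval_word h w"
  by (simp add: eval_word_def)

lemma eval_word_Nil [simp]: "eval_word h [] = \<one>"
  by (simp add: eval_word_def)

lemma eval_word_carrier: "(\<And>i. i \<in> {1..n} \<Longrightarrow> h i \<in> carrier G) \<Longrightarrow> snd ` set w \<subseteq> {1..n} \<Longrightarrow> eval_word h w \<in> carrier G"
  by (induction w) (auto simp: eval_letter_def)

lemma eval_letter_cancel: "h (snd l) \<in> carrier G \<Longrightarrow> cancels l m \<Longrightarrow> x \<in> carrier G \<Longrightarrow> eval_letter h l \<otimes> (eval_letter h m \<otimes> x) = x"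
  by (cases l; cases m) (auto simp: eval_letter_def cancels_def simp flip: m_assoc)

lemma eval_word_cons_red:
  assumes h: "\<And>i. i \<in> {1..n} \<Longrightarrow> h i \<in> carrier G" and l: "snd l \<in> {1..n}" and w: "snd ` set w \<subseteq> {1..n}"
  shows "eval_word h (cons_red l w) = eval_letter h l \<otimes> eval_word h w"
proof (cases w)
  case Nil then show ?thesis by simp
next
  case (Cons m ms)
  show ?thesis
  proof (cases "cancels l m")
    case True
    have "eval_word h ms \<in> carrier G" using eval_word_carrier[OF h] w Cons by auto
    then show ?thesis using Cons True eval_letter_cancel[of h l m "eval_word h ms", OF h[OF l] True] by simp
  next
    case False then show ?thesis using Cons by simp
  qed
qed

lemma eval_word_word_mult:
  assumes h: "\<And>i. i \<in> {1..n} \<Longrightarrow> h i \<in> carrier G"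
  shows "snd ` set v \<subseteq> {1..n} \<Longrightarrow> snd ` set w \<subseteq> {1..n} \<Longrightarrow> eval_word h (word_mult v w) = eval_word h v \<otimes> eval_word h w"
proof (induction v)
  case Nil
  then show ?case using eval_word_carrier[OF h] by simp
next
  case (Cons l vs)
  have l: "snd l \<in> {1..n}" and vs: "snd ` set vs \<subseteq> {1..n}" using Cons by auto
  have "eval_word h (word_mult (l # vs) w) = eval_word h (cons_red l (word_mult vs w))" by simp
  also have "\<dots> = eval_letter h l \<otimes> eval_word h (word_mult vs w)"
    by (rule eval_word_cons_red[OF h l subset_trans[OF word_mult_letters Un_least[OF vs Cons.prems(2)]]])
  also have "\<dots> = eval_letter h l \<otimes> (eval_word h vs \<otimes> eval_word h w)" using Cons vs by simp
  finally show ?case using eval_letter_carrier[of h l, OF h[OF l]] eval_word_carrier[OF h vs] eval_word_carrier[OF h Cons(3)] by (simp add: m_assoc)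
qed

lemma eval_word_hom:
  assumes h: "\<And>i. i \<in> {1..n} \<Longrightarrow> h i \<in> carrier G"
  shows "eval_word h \<in> hom (FreeGrp n) G"
proof (rule homI)
  fix x assume "x \<in> carrier (FreeGrp n)"
  then show "eval_word h x \<in> carrier G" using eval_word_carrier[OF h] by (simp add: FreeGrp_carrier)
next
  fix x y assume "x \<in> carrier (FreeGrp n)" "y \<in> carrier (FreeGrp n)"
  then show "eval_word h (x \<otimes>\<^bsub>FreeGrp n\<^esub> y) = eval_word h x \<otimes> eval_word h y"
    using eval_word_word_mult[OF h] by (simp add: FreeGrp_carrier FreeGrp_mult)
qed

lemma eval_word_xgen: "h i \<in> carrier G \<Longrightarrow> eval_word h (xgen i) = h i"
  by (simp add: xgen_def eval_letter_def)

end

definition Ntilde_gens :: "nat \<Rightarrow> (bool \<times> nat) list set" where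
  "Ntilde_gens n = {h \<otimes>\<^bsub>FreeGrp n\<^esub> h | h. h \<in> derived (FreeGrp n) (carrier (FreeGrp n))}
      \<union> {xgen i \<otimes>\<^bsub>FreeGrp n\<^esub> xgen i | i. i \<in> {1..n}}"

lemma Ntilde_alt: "Ntilde n = normal_closure (FreeGrp n) (Ntilde_gens n)"
  by (simp add: Ntilde_def Ntilde_gens_def)

lemma Ntilde_gens_carrier: "Ntilde_gens n \<subseteq> carrier (FreeGrp n)"
proof -
  interpret F: group "FreeGrp n" by (rule FreeGrp_group)
  have "derived (FreeGrp n) (carrier (FreeGrp n)) \<subseteq> carrier (FreeGrp n)" by (rule F.derived_in_carrier) simp
  then show ?thesis unfolding Ntilde_gens_def using xgen_carrier by auto
qed

lemma (in group) normal_closure_normal: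
  assumes S: "S \<subseteq> carrier G"
  shows "normal_closure G S \<lhd> G"
  unfolding normal_closure_def
proof (rule normal_generateI)
  show "{g \<otimes> s \<otimes> inv g |g s. g \<in> carrier G \<and> s \<in> S} \<subseteq> carrier G" using S by auto
next
  fix h x assume h: "h \<in> {g \<otimes> s \<otimes> inv g |g s. g \<in> carrier G \<and> s \<in> S}" and x: "x \<in> carrier G"
  then obtain y s where ys: "y \<in> carrier G" "s \<in> S" "h = y \<otimes> s \<otimes> inv y" by blast
  have sc: "s \<in> carrier G" using ys S by auto
  have "x \<otimes> h \<otimes> inv x = (x \<otimes> y) \<otimes> s \<otimes> inv (x \<otimes> y)"
    using ys sc x by (simp add: m_assoc inv_mult_group)
  moreover have "x \<otimes> y \<in> carrier G" using x ys by simp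
  ultimately show "x \<otimes> h \<otimes> inv x \<in> {g \<otimes> s \<otimes> inv g |g s. g \<in> carrier G \<and> s \<in> S}"
    using ys(2) by blast
qed

lemma (in group) normal_closure_subset:
  assumes S: "S \<subseteq> N" and N: "N \<lhd> G"
  shows "normal_closure G S \<subseteq> N"
  unfolding normal_closure_def
proof (rule generate_subgroup_incl)
  show "subgroup N G" using N normal_imp_subgroup by blast
  show "{g \<otimes> s \<otimes> inv g |g s. g \<in> carrier G \<and> s \<in> S} \<subseteq> N"
    using S normal.inv_op_closed2[OF N] by blast
qed

lemma Ntilde_normal: "Ntilde n \<lhd> FreeGrp n"
  unfolding Ntilde_alt by (rule group.normal_closure_normal[OF FreeGrp_group Ntilde_gens_carrier])

lemma CC_group: "group (CC n)"
  unfolding CC_def by (rule normal.factorgroup_is_group[OF Ntilde_normal])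

lemma CC_proj_hom: "(\<lambda>w. Ntilde n #>\<^bsub>FreeGrp n\<^esub> w) \<in> hom (FreeGrp n) (CC n)"
  unfolding CC_def by (rule normal.r_coset_hom_Mod[OF Ntilde_normal])

lemma CC_carrier: "carrier (CC n) = (\<lambda>w. Ntilde n #>\<^bsub>FreeGrp n\<^esub> w) ` carrier (FreeGrp n)"
  by (auto simp: CC_def FactGroup_def RCOSETS_def)

lemma Ntilde_gens_subset: "Ntilde_gens n \<subseteq> Ntilde n"
  unfolding Ntilde_alt normal_closure_def
proof
  interpret F: group "FreeGrp n" by (rule FreeGrp_group)
  fix s assume s: "s \<in> Ntilde_gens n"
  have sc: "s \<in> carrier (FreeGrp n)" using s Ntilde_gens_carrier by blast
  have "s = \<one>\<^bsub>FreeGrp n\<^esub> \<otimes>\<^bsub>FreeGrp n\<^esub> s \<otimes>\<^bsub>FreeGrp n\<^esub> inv\<^bsub>FreeGrp n\<^esub> \<one>\<^bsub>FreeGrp n\<^esub>" using sc by simp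
  then show "s \<in> generate (FreeGrp n) {g \<otimes>\<^bsub>FreeGrp n\<^esub> s \<otimes>\<^bsub>FreeGrp n\<^esub> inv\<^bsub>FreeGrp n\<^esub> g |g s. g \<in> carrier (FreeGrp n) \<and> s \<in> Ntilde_gens n}"
    using s by (intro generate.incl) blast
qed

lemma CC_mult: "Xa \<otimes>\<^bsub>CC n\<^esub> Y = set_mult (FreeGrp n) Xa Y"
  by (simp add: CC_def FactGroup_def)

lemma CC_one: "\<one>\<^bsub>CC n\<^esub> = Ntilde n"
  by (simp add: CC_def)

lemma CC_coset_mult:
  assumes v: "v \<in> carrier (FreeGrp n)" and w: "w \<in> carrier (FreeGrp n)"
  shows "(Ntilde n #>\<^bsub>FreeGrp n\<^esub> v) \<otimes>\<^bsub>CC n\<^esub> (Ntilde n #>\<^bsub>FreeGrp n\<^esub> w) = Ntilde n #>\<^bsub>FreeGrp n\<^esub> (v \<otimes>\<^bsub>FreeGrp n\<^esub> w)"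
  unfolding CC_mult by (rule normal.rcos_sum[OF Ntilde_normal v w])

lemma Ntilde_coset:
  assumes "w \<in> Ntilde n"
  shows "Ntilde n #>\<^bsub>FreeGrp n\<^esub> w = Ntilde n"
  by (rule subgroup.rcos_const[OF normal_imp_subgroup[OF Ntilde_normal] FreeGrp_group assms])

lemma cgen_carrier: "i \<in> {1..n} \<Longrightarrow> cgen n i \<in> carrier (CC n)"
  unfolding CC_carrier cgen_def using xgen_carrier by blast

lemma cgen_square: "i \<in> {1..n} \<Longrightarrow> cgen n i \<otimes>\<^bsub>CC n\<^esub> cgen n i = \<one>\<^bsub>CC n\<^esub>"
proof -
  assume i: "i \<in> {1..n}"
  have "xgen i \<otimes>\<^bsub>FreeGrp n\<^esub> xgen i \<in> Ntilde n" using Ntilde_gens_subset i unfolding Ntilde_gens_def by blast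
  then show ?thesis unfolding cgen_def CC_one
    using CC_coset_mult[OF xgen_carrier[OF i] xgen_carrier[OF i]] Ntilde_coset by simp
qed

lemma CC_generated: "carrier (CC n) \<subseteq> generate (CC n) (cgen n ` {1..n})"
proof -
  interpret pi: group_hom "FreeGrp n" "CC n" "\<lambda>w. Ntilde n #>\<^bsub>FreeGrp n\<^esub> w"
    by (simp add: group_hom_def group_hom_axioms_def FreeGrp_group CC_group CC_proj_hom)
  have xs: "xgen ` {1..n} \<subseteq> carrier (FreeGrp n)" using xgen_carrier by blast
  have "carrier (CC n) \<subseteq> (\<lambda>w. Ntilde n #>\<^bsub>FreeGrp n\<^esub> w) ` generate (FreeGrp n) (xgen ` {1..n})"
    unfolding CC_carrier using FreeGrp_generated by blast
  also have "\<dots> = generate (CC n) ((\<lambda>w. Ntilde n #>\<^bsub>FreeGrp n\<^esub> w) ` xgen ` {1..n})"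
    by (rule pi.generate_img[symmetric, OF xs])
  also have "(\<lambda>w. Ntilde n #>\<^bsub>FreeGrp n\<^esub> w) ` xgen ` {1..n} = cgen n ` {1..n}"
    by (auto simp: cgen_def image_iff)
  finally show ?thesis .
qed

lemma CC_derived_square:
  assumes x: "x \<in> derived (CC n) (carrier (CC n))"
  shows "x \<otimes>\<^bsub>CC n\<^esub> x = \<one>\<^bsub>CC n\<^esub>"
proof -
  interpret F: group "FreeGrp n" by (rule FreeGrp_group)
  interpret pi: group_hom "FreeGrp n" "CC n" "\<lambda>w. Ntilde n #>\<^bsub>FreeGrp n\<^esub> w"
    by (simp add: group_hom_def group_hom_axioms_def FreeGrp_group CC_group CC_proj_hom)
  have "derived (CC n) (carrier (CC n)) = (\<lambda>w. Ntilde n #>\<^bsub>FreeGrp n\<^esub> w) ` derived (FreeGrp n) (carrier (FreeGrp n))"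
    unfolding CC_carrier by (rule pi.derived_img) simp
  then obtain y where y: "y \<in> derived (FreeGrp n) (carrier (FreeGrp n))" "x = Ntilde n #>\<^bsub>FreeGrp n\<^esub> y"
    using x by blast
  have yc: "y \<in> carrier (FreeGrp n)" using y(1) F.derived_in_carrier[of "carrier (FreeGrp n)"] by blast
  have "y \<otimes>\<^bsub>FreeGrp n\<^esub> y \<in> Ntilde n" using Ntilde_gens_subset y(1) unfolding Ntilde_gens_def by blast
  then show ?thesis unfolding y(2) CC_one using CC_coset_mult[OF yc yc] Ntilde_coset by simp
qed


context exp2_derived
begin

lemma Ntilde_subset_kernel: "Ntilde n \<subseteq> kernel (FreeGrp n) G (eval_word g)"
proof -
  interpret F: group "FreeGrp n" by (rule FreeGrp_group)
  interpret e: group_hom "FreeGrp n" G "eval_word g"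
    using eval_word_hom[where h = g] gen_carrier by (simp add: group_hom_def group_hom_axioms_def FreeGrp_group is_group)
  show ?thesis unfolding Ntilde_alt
  proof (rule F.normal_closure_subset[OF _ e.normal_kernel])
    show "Ntilde_gens n \<subseteq> kernel (FreeGrp n) G (eval_word g)"
    proof
      fix s assume s: "s \<in> Ntilde_gens n"
      have sc: "s \<in> carrier (FreeGrp n)" using s Ntilde_gens_carrier by blast
      have "eval_word g s = \<one>"
      proof (cases "s \<in> {xgen i \<otimes>\<^bsub>FreeGrp n\<^esub> xgen i | i. i \<in> {1..n}}")
        case True
        then obtain i where i: "i \<in> {1..n}" "s = xgen i \<otimes>\<^bsub>FreeGrp n\<^esub> xgen i" by blast
        then show ?thesis using xgen_carrier[OF i(1)] eval_word_xgen gen_carrier gen_square by simp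
      next
        case False
        then obtain y where y: "y \<in> derived (FreeGrp n) (carrier (FreeGrp n))" "s = y \<otimes>\<^bsub>FreeGrp n\<^esub> y"
          using s unfolding Ntilde_gens_def by blast
        have yc: "y \<in> carrier (FreeGrp n)" using y(1) F.derived_in_carrier[of "carrier (FreeGrp n)"] by blast
        have "eval_word g y \<in> eval_word g ` derived (FreeGrp n) (carrier (FreeGrp n))" using y(1) by blast
        also have "\<dots> = derived G (eval_word g ` carrier (FreeGrp n))" by (rule e.derived_img[symmetric]) simp
        also have "\<dots> \<subseteq> D" by (rule mono_derived) (use e.hom_closed in auto)
        finally have "eval_word g y \<otimes> eval_word g y = \<one>" by (rule derived_square)
        then show ?thesis using y(2) yc by simp
      qed
      then show "s \<in> kernel (FreeGrp n) G (eval_word g)" using sc by (simp add: kernel_def)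
    qed
  qed
qed

lemma CC_lift:
  "\<exists>f\<in>hom (CC n) G. (\<forall>i\<in>{1..n}. f (cgen n i) = g i) \<and>
     (\<forall>w\<in>carrier (FreeGrp n). f (Ntilde n #>\<^bsub>FreeGrp n\<^esub> w) = eval_word g w)"
proof -
  interpret e: group_hom "FreeGrp n" G "eval_word g"
    using eval_word_hom[where h = g] gen_carrier by (simp add: group_hom_def group_hom_axioms_def FreeGrp_group is_group)
  obtain f where f: "f \<in> hom (FreeGrp n Mod Ntilde n) G"
    "\<And>w. w \<in> carrier (FreeGrp n) \<Longrightarrow> f (Ntilde n #>\<^bsub>FreeGrp n\<^esub> w) = eval_word g w"
    using e.FactGroup_universal_kernel[OF Ntilde_normal Ntilde_subset_kernel] by blast
  moreover have "f (cgen n i) = g i" if "i \<in> {1..n}" for i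
    using f(2)[OF xgen_carrier[OF that]] eval_word_xgen gen_carrier[OF that] by (simp add: cgen_def)
  ultimately show ?thesis unfolding CC_def by blast
qed

end

lemma exp2_derived_Vn: "exp2_derived (Vn n) n (\<lambda>i. {i})"
proof -
  interpret V: comm_group "Vn n" by (rule Vn_comm_group)
  show ?thesis
    by unfold_locales (use V.derived_eq_singleton in auto)
qed

lemma eval_word_Vn: "snd ` set w \<subseteq> {1..n} \<Longrightarrow> group.eval_word (Vn n) (\<lambda>i. {i}) w = parity_map w"
proof (induction w)
  case Nil
  then show ?case using group.eval_word_Nil[OF Vn_group] by (simp add: parity_map_def)
next
  case (Cons l ws)
  have "snd l \<in> {1..n}" "snd ` set ws \<subseteq> {1..n}" using Cons by auto
  then have "group.eval_word (Vn n) (\<lambda>i. {i}) (l # ws) = symdiff {snd l} (parity_map ws)"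
    using group.eval_word_Cons[OF Vn_group] Cons.IH by (simp add: group.eval_letter_def[OF Vn_group])
  also have "\<dots> = parity_map (l # ws)"
    by (rule Set.set_eqI) (auto simp: parity_map_def)
  finally show ?case .
qed

lemma cphi_coset: "w \<in> carrier (FreeGrp n) \<Longrightarrow> cphi n (Ntilde n #>\<^bsub>FreeGrp n\<^esub> w) = parity_map w"
proof -
  interpret V: exp2_derived "Vn n" n "\<lambda>i. {i}" by (rule exp2_derived_Vn)
  obtain f where "\<forall>w\<in>carrier (FreeGrp n). f (Ntilde n #>\<^bsub>FreeGrp n\<^esub> w) = V.eval_word (\<lambda>i. {i}) w"
    using V.CC_lift by blast
  then have f: "f (Ntilde n #>\<^bsub>FreeGrp n\<^esub> w) = parity_map w" if "w \<in> carrier (FreeGrp n)" for w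
    using that eval_word_Vn by (simp add: FreeGrp_carrier)
  assume w: "w \<in> carrier (FreeGrp n)"
  interpret N: subgroup "Ntilde n" "FreeGrp n" using Ntilde_normal normal_imp_subgroup by blast
  have same: "parity_map v = parity_map w" if "v \<in> Ntilde n #>\<^bsub>FreeGrp n\<^esub> w" for v
  proof -
    have "v \<in> carrier (FreeGrp n)"
      using that w monoid.r_coset_subset_G[OF group.is_monoid[OF FreeGrp_group] N.subset] by blast
    moreover have "Ntilde n #>\<^bsub>FreeGrp n\<^esub> w = Ntilde n #>\<^bsub>FreeGrp n\<^esub> v"
      by (rule group.repr_independence[OF FreeGrp_group that w N.subgroup_axioms])
    ultimately show ?thesis using f w by metis
  qed
  have "w \<in> Ntilde n #>\<^bsub>FreeGrp n\<^esub> w"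
    by (rule group.rcos_self[OF FreeGrp_group w N.subgroup_axioms])
  then show ?thesis
    unfolding cphi_def by (intro the_equality) (use same in blast)+
qed

lemma cphi_hom: "cphi n \<in> hom (CC n) (Vn n)"
proof -
  interpret V: exp2_derived "Vn n" n "\<lambda>i. {i}" by (rule exp2_derived_Vn)
  obtain f where f: "f \<in> hom (CC n) (Vn n)"
    "\<forall>w\<in>carrier (FreeGrp n). f (Ntilde n #>\<^bsub>FreeGrp n\<^esub> w) = V.eval_word (\<lambda>i. {i}) w"
    using V.CC_lift by blast
  interpret C: group "CC n" by (rule CC_group)
  have eq: "cphi n x = f x" if "x \<in> carrier (CC n)" for x
    using that f(2) cphi_coset eval_word_Vn by (auto simp: CC_carrier FreeGrp_carrier)
  show ?thesis
  proof (rule homI)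
    fix x assume x: "x \<in> carrier (CC n)"
    show "cphi n x \<in> carrier (Vn n)" using eq[OF x] hom_in_carrier[OF f(1) x] by simp
  next
    fix x y assume x: "x \<in> carrier (CC n)" and y: "y \<in> carrier (CC n)"
    show "cphi n (x \<otimes>\<^bsub>CC n\<^esub> y) = cphi n x \<otimes>\<^bsub>Vn n\<^esub> cphi n y"
      using eq[OF C.m_closed[OF x y]] eq[OF x] eq[OF y] hom_mult[OF f(1) x y] by simp
  qed
qed

theorem CC_expansion: "expansion_group n (CC n) (cphi n) (cgen n)"
proof (rule expansion_groupI[OF CC_group cphi_hom _ CC_generated CC_derived_square])
  fix i assume i: "i \<in> {1..n}"
  have "cphi n (cgen n i) = {i}"
    using cphi_coset[OF xgen_carrier[OF i]] by (auto simp: cgen_def parity_map_def xgen_def)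
  then show "cgen n i \<in> carrier (CC n) \<and> cphi n (cgen n i) = {i} \<and>
      cgen n i \<otimes>\<^bsub>CC n\<^esub> cgen n i = \<one>\<^bsub>CC n\<^esub>"
    using cgen_carrier[OF i] cgen_square[OF i] by simp
qed

section \<open>Expansion groups are generated by their involutions\<close>

locale expansion = exp2_derived +
  fixes \<phi>
  assumes phi_hom: "\<phi> \<in> hom G (Vn n)"
    and phi_gen: "\<And>i. i \<in> {1..n} \<Longrightarrow> \<phi> (g i) = {i}"
    and kernel_eq: "kernel G (Vn n) \<phi> = D"
begin

abbreviation gen_span where "gen_span \<equiv> generate G (g ` {1..n})"

definition delta_gens where "delta_gens = {delta (g i) k | i k. i \<in> {1..n} \<and> k \<in> D}"

abbreviation delta_span where "delta_span \<equiv> generate G delta_gens"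

lemma gens_carrier: "g ` {1..n} \<subseteq> carrier G"
  using gen_carrier by blast

lemma gen_span_carrier: "x \<in> gen_span \<Longrightarrow> x \<in> carrier G"
  using generate_in_carrier[OF gens_carrier] by blast

lemma gen_span_inv: "x \<in> gen_span \<Longrightarrow> inv x \<in> gen_span"
  by (rule generate_m_inv_closed[OF gens_carrier])

lemma gen_in_gen_span: "i \<in> {1..n} \<Longrightarrow> g i \<in> gen_span"
  by (rule generate.incl) blast

lemma delta_gens_D: "delta_gens \<subseteq> D"
  unfolding delta_gens_def using delta_D[OF invol_gen] by blast

lemma delta_span_D: "delta_span \<subseteq> D"
  by (rule generate_subgroup_incl[OF delta_gens_D D_subgroup])

lemma delta_span_carrier: "x \<in> delta_span \<Longrightarrow> x \<in> carrier G"
  using delta_span_D D_carrier by blast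

lemma delta_span_inv: "x \<in> delta_span \<Longrightarrow> inv x \<in> delta_span"
  using generate_m_inv_closed delta_gens_D D_carrier by blast

lemma conj_gen_delta_span:
  assumes i: "i \<in> {1..n}" and y: "y \<in> delta_span"
  shows "g i \<otimes> y \<otimes> g i \<in> delta_span"
proof (rule conj_involution_generate_closed[OF _ gen_carrier[OF i] gen_square[OF i] _ y])
  show "delta_gens \<subseteq> carrier G" using delta_gens_D D_carrier by blast
  show "\<forall>x\<in>delta_gens. g i \<otimes> x \<otimes> g i \<in> delta_span"
  proof
    fix x assume "x \<in> delta_gens"
    then obtain j k where jk: "j \<in> {1..n}" "k \<in> D" "x = delta (g j) k" unfolding delta_gens_def by blast
    then have "g i \<otimes> x \<otimes> g i = delta (g j) (conj_by (g i) k)"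
      using conj_by_delta_commute[OF invol_gen[OF i] invol_gen[OF jk(1)] jk(2)] by (simp add: conj_by_def)
    moreover have "conj_by (g i) k \<in> D" by (rule conj_by_D[OF invol_gen[OF i] jk(2)])
    ultimately show "g i \<otimes> x \<otimes> g i \<in> delta_span"
      using jk(1) by (intro generate.incl) (auto simp: delta_gens_def)
  qed
qed

lemma conj_gen_span_delta_span:
  assumes h: "h \<in> gen_span"
  shows "\<And>y. y \<in> delta_span \<Longrightarrow> h \<otimes> y \<otimes> inv h \<in> delta_span"
  using h
proof (induction rule: generate.induct)
  case one
  then show ?case using delta_span_carrier by simp
next
  case (incl x)
  then obtain i where i: "i \<in> {1..n}" "x = g i" by blast
  then show ?case using conj_gen_delta_span[OF i(1) incl(2)] invol_inv[OF invol_gen[OF i(1)]] by simp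
next
  case (inv x)
  then obtain i where i: "i \<in> {1..n}" "x = g i" by blast
  then show ?case using conj_gen_delta_span[OF i(1) inv(2)] invol_inv[OF invol_gen[OF i(1)]] by simp
next
  case (eng h1 h2)
  have c: "h1 \<in> carrier G" "h2 \<in> carrier G" "y \<in> carrier G"
    using eng gen_span_carrier delta_span_carrier by auto
  have "h1 \<otimes> h2 \<otimes> y \<otimes> inv (h1 \<otimes> h2) = h1 \<otimes> (h2 \<otimes> y \<otimes> inv h2) \<otimes> inv h1"
    using c by (simp add: m_assoc inv_mult_group)
  then show ?case using eng by simp
qed

lemma commutator_gen_span_D:
  assumes h: "h \<in> gen_span"
  shows "\<And>k. k \<in> D \<Longrightarrow> h \<otimes> k \<otimes> inv h \<otimes> inv k \<in> delta_span"
  using h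
proof (induction rule: generate.induct)
  case one
  then show ?case using D_carrier generate.one by simp
next
  case (incl x)
  then obtain i where i: "i \<in> {1..n}" "x = g i" by blast
  have "x \<otimes> k \<otimes> inv x \<otimes> inv k = delta (g i) k"
    using i invol_inv[OF invol_gen[OF i(1)]] D_inv[OF incl(2)] D_comm[OF incl(2) conj_by_D[OF invol_gen[OF i(1)] incl(2)]]
    by (simp add: delta_def conj_by_def)
  then show ?case using i incl(2) by (intro generate.incl) (auto simp: delta_gens_def)
next
  case (inv x)
  then obtain i where i: "i \<in> {1..n}" "x = g i" by blast
  have "inv x \<otimes> k \<otimes> inv (inv x) \<otimes> inv k = delta (g i) k"
    using i invol_inv[OF invol_gen[OF i(1)]] D_inv[OF inv(2)] D_comm[OF inv(2) conj_by_D[OF invol_gen[OF i(1)] inv(2)]]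
    by (simp add: delta_def conj_by_def)
  then show ?case using i inv(2) by (intro generate.incl) (auto simp: delta_gens_def)
next
  case (eng h1 h2)
  have c: "h1 \<in> carrier G" "h2 \<in> carrier G" "k \<in> carrier G" using eng gen_span_carrier D_carrier by auto
  have "h1 \<otimes> h2 \<otimes> k \<otimes> inv (h1 \<otimes> h2) \<otimes> inv k =
      (h1 \<otimes> (h2 \<otimes> k \<otimes> inv h2 \<otimes> inv k) \<otimes> inv h1) \<otimes> (h1 \<otimes> k \<otimes> inv h1 \<otimes> inv k)"
    using c by (simp add: m_assoc inv_mult_group mult_inv_cancel_left inv_mult_cancel_left)
  moreover have "h1 \<otimes> (h2 \<otimes> k \<otimes> inv h2 \<otimes> inv k) \<otimes> inv h1 \<in> delta_span"
    using conj_gen_span_delta_span[OF eng(1) eng(4)[OF eng(5)]] .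
  ultimately show ?case using eng generate.eng by metis
qed

lemma gen_span_times_D:
  assumes x: "x \<in> carrier G"
  obtains h where "h \<in> gen_span" "inv h \<otimes> x \<in> D"
proof -
  have gens: "g i \<in> carrier G \<and> \<phi> (g i) = {i}" if "i \<in> {1..n}" for i
    using that gen_carrier phi_gen by simp
  have "\<phi> x \<subseteq> {1..n}" using hom_in_carrier[OF phi_hom x] by simp
  then obtain h where h: "h \<in> gen_span" "\<phi> h = \<phi> x"
    using Vn_hom_onto_from_generators[OF phi_hom gens] by blast
  have hc: "h \<in> carrier G" using gen_span_carrier h by simp
  interpret phi: group_hom G "Vn n" \<phi>
    by (simp add: group_hom_def group_hom_axioms_def is_group Vn_group phi_hom)
  have "\<phi> (inv h \<otimes> x) = symdiff (\<phi> h) (\<phi> x)" using hc x phi.hom_closed[OF hc] by simp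
  then have "inv h \<otimes> x \<in> kernel G (Vn n) \<phi>" using h hc x by (simp add: kernel_def)
  then show thesis using that h(1) kernel_eq by blast
qed

lemma commutator_carrier_D:
  assumes x: "x \<in> carrier G" and k: "k \<in> D"
  shows "x \<otimes> k \<otimes> inv x \<otimes> inv k \<in> delta_span"
proof -
  obtain h where h: "h \<in> gen_span" "inv h \<otimes> x \<in> D" using gen_span_times_D[OF x] .
  define k' where "k' = inv h \<otimes> x"
  have hc: "h \<in> carrier G" using gen_span_carrier h by simp
  have k'D: "k' \<in> D" using h k'_def by simp
  have kc: "k \<in> carrier G" "k' \<in> carrier G" using k k'D D_carrier by auto
  have xe: "x = h \<otimes> k'" unfolding k'_def using hc x by (simp flip: m_assoc)
  have "x \<otimes> k \<otimes> inv x \<otimes> inv k = h \<otimes> (k' \<otimes> k) \<otimes> inv k' \<otimes> inv h \<otimes> inv k"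
    unfolding xe using hc kc by (simp add: m_assoc inv_mult_group)
  also have "k' \<otimes> k = k \<otimes> k'" using D_comm[OF k'D k] .
  also have "h \<otimes> (k \<otimes> k') \<otimes> inv k' \<otimes> inv h \<otimes> inv k = h \<otimes> k \<otimes> inv h \<otimes> inv k"
    using hc kc by (simp add: m_assoc)
  finally show ?thesis using commutator_gen_span_D[OF h(1) k] by simp
qed

definition gen_delta_prod where
  "gen_delta_prod = {h \<otimes> m | h m. h \<in> gen_span \<and> m \<in> delta_span}"

lemma gen_delta_prod_subgroup: "subgroup gen_delta_prod G"
proof (rule subgroupI)
  show "gen_delta_prod \<subseteq> carrier G"
    unfolding gen_delta_prod_def using gen_span_carrier delta_span_carrier by auto
  show "gen_delta_prod \<noteq> {}"
    unfolding gen_delta_prod_def using generate.one[of G "g ` {1..n}"] generate.one[of G delta_gens] by force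
next
  fix x assume "x \<in> gen_delta_prod"
  then obtain h m where x: "x = h \<otimes> m" "h \<in> gen_span" "m \<in> delta_span"
    unfolding gen_delta_prod_def by blast
  have c: "h \<in> carrier G" "m \<in> carrier G" using x gen_span_carrier delta_span_carrier by auto
  have "inv x = inv h \<otimes> (h \<otimes> inv m \<otimes> inv h)"
    using x c by (simp add: m_assoc inv_mult_group inv_mult_cancel_left)
  moreover have "h \<otimes> inv m \<otimes> inv h \<in> delta_span"
    using conj_gen_span_delta_span[OF x(2) delta_span_inv[OF x(3)]] .
  ultimately show "inv x \<in> gen_delta_prod"
    unfolding gen_delta_prod_def using gen_span_inv[OF x(2)] by blast
next
  fix x y assume "x \<in> gen_delta_prod" "y \<in> gen_delta_prod"
  then obtain h1 m1 h2 m2 where x: "x = h1 \<otimes> m1" "h1 \<in> gen_span" "m1 \<in> delta_span"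
    and y: "y = h2 \<otimes> m2" "h2 \<in> gen_span" "m2 \<in> delta_span"
    unfolding gen_delta_prod_def by blast
  have c: "h1 \<in> carrier G" "h2 \<in> carrier G" "m1 \<in> carrier G" "m2 \<in> carrier G"
    using x y gen_span_carrier delta_span_carrier by auto
  have "x \<otimes> y = (h1 \<otimes> h2) \<otimes> ((inv h2 \<otimes> m1 \<otimes> inv (inv h2)) \<otimes> m2)"
    using x y c by (simp add: m_assoc mult_inv_cancel_left)
  moreover have "inv h2 \<otimes> m1 \<otimes> inv (inv h2) \<in> delta_span"
    by (rule conj_gen_span_delta_span[OF gen_span_inv[OF y(2)] x(3)])
  ultimately show "x \<otimes> y \<in> gen_delta_prod"
    unfolding gen_delta_prod_def using generate.eng[OF x(2) y(2)] generate.eng[OF _ y(3)] by blast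
qed

text \<open>Write \<open>a = h_1 k_1\<close> and \<open>b = h_2 k_2\<close> with \<open>h_i\<close> in the span of the generators and
  \<open>k_i \<in> D\<close>; all correction terms of \<open>[a, b]\<close> against \<open>[h_1, h_2]\<close> lie in \<open>delta_span\<close>.\<close>

lemma commutator_gen_delta_prod:
  assumes a: "a \<in> carrier G" and b: "b \<in> carrier G"
  shows "a \<otimes> b \<otimes> inv a \<otimes> inv b \<in> gen_delta_prod"
proof -
  obtain h1 h2 where h: "h1 \<in> gen_span" "inv h1 \<otimes> a \<in> D" "h2 \<in> gen_span" "inv h2 \<otimes> b \<in> D"
    using gen_span_times_D[OF a] gen_span_times_D[OF b] by metis
  define k1 where "k1 = inv h1 \<otimes> a"
  define k2 where "k2 = inv h2 \<otimes> b"
  have c: "h1 \<in> carrier G" "h2 \<in> carrier G" using h gen_span_carrier by auto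
  have kD: "k1 \<in> D" "k2 \<in> D" using h k1_def k2_def by auto
  have kc: "k1 \<in> carrier G" "k2 \<in> carrier G" using kD D_carrier by auto
  have ab: "a = h1 \<otimes> k1" "b = h2 \<otimes> k2" unfolding k1_def k2_def using c a b by (simp_all flip: m_assoc)
  define m1 where "m1 = inv (b \<otimes> k1 \<otimes> inv b \<otimes> inv k1)"
  define m2 where "m2 = h1 \<otimes> k2 \<otimes> inv h1 \<otimes> inv k2"
  define c12 where "c12 = h1 \<otimes> h2 \<otimes> inv h1 \<otimes> inv h2"
  have m1: "m1 \<in> delta_span" unfolding m1_def using delta_span_inv[OF commutator_carrier_D[OF b kD(1)]] .
  have m2: "m2 \<in> delta_span" unfolding m2_def using commutator_gen_span_D[OF h(1) kD(2)] .
  have c12: "c12 \<in> gen_span" unfolding c12_def using generate.eng gen_span_inv h(1,3) by metis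
  have "a \<otimes> b \<otimes> inv a \<otimes> inv b
      = c12 \<otimes> ((inv c12 \<otimes> (h1 \<otimes> m1 \<otimes> inv h1) \<otimes> inv (inv c12)) \<otimes> (h2 \<otimes> m2 \<otimes> inv h2))"
    unfolding ab m1_def m2_def c12_def using c kc
    by (simp add: m_assoc inv_mult_group mult_inv_cancel_left inv_mult_cancel_left)
  moreover have "(inv c12 \<otimes> (h1 \<otimes> m1 \<otimes> inv h1) \<otimes> inv (inv c12)) \<otimes> (h2 \<otimes> m2 \<otimes> inv h2) \<in> delta_span"
    by (rule generate.eng[OF conj_gen_span_delta_span[OF gen_span_inv[OF c12] conj_gen_span_delta_span[OF h(1) m1]]
          conj_gen_span_delta_span[OF h(3) m2]])
  ultimately show ?thesis unfolding gen_delta_prod_def using c12 by blast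
qed

lemma D_subset_gen_delta_prod: "D \<subseteq> gen_delta_prod"
  unfolding derived_def
  by (rule generate_subgroup_incl[OF _ gen_delta_prod_subgroup]) (use commutator_gen_delta_prod in blast)

lemma delta_list_gen_span_D:
  "set l \<subseteq> {1..n} \<Longrightarrow> h \<in> gen_span \<Longrightarrow> h \<in> D \<Longrightarrow> delta_list l h \<in> gen_span \<and> delta_list l h \<in> D"
proof (induction l)
  case (Cons i l)
  then have i: "i \<in> {1..n}" and IH: "delta_list l h \<in> gen_span" "delta_list l h \<in> D" by auto
  have "delta (g i) (delta_list l h) = delta_list l h \<otimes> (g i \<otimes> delta_list l h \<otimes> g i)"
    by (simp add: delta_def conj_by_def)
  moreover have "delta_list l h \<otimes> (g i \<otimes> delta_list l h \<otimes> g i) \<in> gen_span"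
    using IH gen_in_gen_span[OF i] generate.eng by metis
  ultimately show ?case using delta_D[OF invol_gen[OF i] IH(2)] by simp
qed simp

lemma delta_list_delta_span:
  assumes l: "set l \<subseteq> {1..n}"
    and longer: "\<And>i k. i \<in> {1..n} \<Longrightarrow> k \<in> D \<Longrightarrow> delta_list (l @ [i]) k \<in> gen_span"
    and m: "m \<in> delta_span"
  shows "delta_list l m \<in> gen_span"
  using m
proof (induction rule: generate.induct)
  case one
  then show ?case using delta_list_one[OF l] generate.one by metis
next
  case (incl x)
  then obtain i k where ik: "i \<in> {1..n}" "k \<in> D" "x = delta (g i) k" unfolding delta_gens_def by blast
  then show ?case using longer[OF ik(1,2)] by (simp add: delta_list_append)
next
  case (inv x)
  then obtain i k where ik: "i \<in> {1..n}" "k \<in> D" "x = delta (g i) k" unfolding delta_gens_def by blast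
  then have "inv x = x" using D_inv delta_D[OF invol_gen[OF ik(1)] ik(2)] by simp
  then show ?case using longer[OF ik(1,2)] ik(3) by (simp add: delta_list_append)
next
  case (eng a b)
  have "a \<in> D" "b \<in> D" using eng delta_span_D by auto
  then have "delta_list l (a \<otimes> b) = delta_list l a \<otimes> delta_list l b" using delta_list_mult[OF l] by simp
  then show ?case using eng generate.eng by metis
qed

text \<open>Downward induction on the length of \<open>l\<close>, starting from \<open>delta_list_long\<close>: every \<open>k \<in> D\<close> is
  \<open>h m\<close> with \<open>h \<in> D\<close> in the span of the generators and \<open>m\<close> a product of \<open>\<delta>_i\<close>'s, which
  lengthen \<open>l\<close> by one.\<close>

lemma delta_list_gen_span:
  assumes "set l \<subseteq> {1..n}" "k \<in> D"
  shows "delta_list l k \<in> gen_span"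
  using assms
proof (induction "Suc n - length l" arbitrary: l k rule: less_induct)
  case less
  show ?case
  proof (cases "n < length l")
    case True
    then show ?thesis using delta_list_long less.prems generate.one by metis
  next
    case False
    have longer: "delta_list (l @ [i]) k' \<in> gen_span" if "i \<in> {1..n}" "k' \<in> D" for i k'
      using less.hyps[of "l @ [i]" k'] False less.prems that by simp
    obtain h m where hm: "k = h \<otimes> m" "h \<in> gen_span" "m \<in> delta_span"
      using D_subset_gen_delta_prod less.prems(2) unfolding gen_delta_prod_def by blast
    have mD: "m \<in> D" using hm delta_span_D by blast
    have "h = k \<otimes> inv m" using hm gen_span_carrier delta_span_carrier by (simp add: m_assoc)
    then have hD: "h \<in> D" using D_mult[OF less.prems(2)] D_inv[OF mD] mD by simp
    have "delta_list l k = delta_list l h \<otimes> delta_list l m"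
      using hm delta_list_mult[OF less.prems(1) hD mD] by simp
    then show ?thesis
      using delta_list_gen_span_D[OF less.prems(1) hm(2) hD]
        delta_list_delta_span[OF less.prems(1) longer hm(3)] generate.eng by metis
  qed
qed

theorem carrier_gen_span: "carrier G \<subseteq> gen_span"
proof
  fix x assume x: "x \<in> carrier G"
  obtain h where h: "h \<in> gen_span" "inv h \<otimes> x \<in> D" using gen_span_times_D[OF x] .
  have "inv h \<otimes> x \<in> gen_span" using delta_list_gen_span[of "[]"] h(2) by simp
  moreover have "x = h \<otimes> (inv h \<otimes> x)" using h gen_span_carrier x by (simp flip: m_assoc)
  ultimately show "x \<in> gen_span" using h(1) generate.eng by metis
qed

end

lemma expansion_group_expansion:
  assumes "expansion_group n G \<phi> g"
  shows "expansion G n g \<phi>"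
proof -
  interpret G: group G using assms by (simp add: expansion_group_def)
  show ?thesis
    by unfold_locales (use assms in \<open>auto simp: expansion_group_def\<close>)
qed

section \<open>Universality of \<open>\<G>([n])\<close> and \<open>\<C>([n])\<close>\<close>

lemma expansion_group_exp2_derived: "expansion_group n G \<phi> g \<Longrightarrow> exp2_derived G n g"
  using expansion_group_expansion expansion.axioms(1) by blast

lemma expansion_group_generated:
  "expansion_group n G \<phi> g \<Longrightarrow> carrier G \<subseteq> generate G (g ` {1..n})"
  using expansion_group_expansion expansion.carrier_gen_span by blast

lemma expansion_group_order:
  "n \<ge> 1 \<Longrightarrow> expansion_group n G \<phi> g \<Longrightarrow> finite (carrier G) \<and> order G \<le> 2 ^ bound_exp n"
  using expansion_group_exp2_derived exp2_derived.card_bound expansion_group_generated by blast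

theorem GG_order: "n \<ge> 1 \<Longrightarrow> order (GG n) = 2 ^ bound_exp n"
  using expansion_group_order[OF _ GG_expansion] GG_order_lower by (meson le_antisym)

lemma expansion_hom_unique:
  assumes "group G" "group H" and gen: "carrier G \<subseteq> generate G (g ` {1..n})"
    and g: "g ` {1..n} \<subseteq> carrier G"
    and f1: "expansion_hom n G g H h f1" and f2: "expansion_hom n G g H h f2" and x: "x \<in> carrier G"
  shows "f1 x = f2 x"
  using group.hom_eq_on_generate[OF assms(1,2) _ _ g] f1 f2 gen x by (auto simp: expansion_hom_def)

lemma hom_onto_generated:
  assumes G: "group G" and H: "group H" and f: "f \<in> hom G H" and S: "S \<subseteq> carrier G"
    and gen: "carrier H \<subseteq> generate H (f ` S)"
  shows "f ` carrier G = carrier H"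
proof
  interpret f: group_hom G H f by (simp add: group_hom_def group_hom_axioms_def G H f)
  show "f ` carrier G \<subseteq> carrier H" using f.hom_closed by blast
  have "generate H (f ` S) \<subseteq> f ` carrier G"
    by (rule f.H.generate_subgroup_incl[OF _ f.img_is_subgroup]) (use S in blast)
  then show "carrier H \<subseteq> f ` carrier G" using gen by blast
qed

lemma epi_iso_iff_order:
  assumes "finite (carrier G)" and f: "f \<in> epi G H"
  shows "order H = order G \<longleftrightarrow> f \<in> iso G H"
proof
  assume "order H = order G"
  moreover have "f ` carrier G = carrier H" using f by (simp add: epi_def)
  ultimately have "card (f ` carrier G) = card (carrier G)" by (simp add: order_def)
  then have "inj_on f (carrier G)" using assms(1) eq_card_imp_inj_on by blast
  then show "f \<in> iso G H" using f by (simp add: epi_def iso_def bij_betw_def)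
next
  assume "f \<in> iso G H"
  then have "bij_betw f (carrier G) (carrier H)" by (simp add: iso_def)
  then show "order H = order G" using bij_betw_same_card by (metis order_def)
qed

text \<open>Both groups have order \<open>2 ^ bound_exp n\<close> at most, and \<open>\<G>([n])\<close> attains the bound; so the
  surjection \<open>\<C>([n]) \<rightarrow> \<G>([n])\<close> from the universal property of the free group is injective.\<close>

lemma CC_GG_iso:
  assumes n: "n \<ge> 1"
  shows "\<exists>f. expansion_hom n (CC n) (cgen n) (GG n) (gamma n) f \<and> f \<in> iso (CC n) (GG n)"
proof -
  interpret GG: exp2_derived "GG n" n "gamma n"
    by (rule expansion_group_exp2_derived[OF GG_expansion[OF n]])
  obtain f where f: "f \<in> hom (CC n) (GG n)" "\<forall>i\<in>{1..n}. f (cgen n i) = gamma n i"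
    using GG.CC_lift by blast
  have "f ` cgen n ` {1..n} = gamma n ` {1..n}" using f(2) by (force simp: image_image)
  then have "carrier (GG n) \<subseteq> generate (GG n) (f ` cgen n ` {1..n})" using GG_generated by simp
  moreover have "cgen n ` {1..n} \<subseteq> carrier (CC n)" using cgen_carrier by blast
  ultimately have onto: "f ` carrier (CC n) = carrier (GG n)"
    using hom_onto_generated[OF CC_group GG_group f(1)] by blast
  then have epi: "f \<in> epi (CC n) (GG n)" using f(1) by (simp add: epi_def)
  have CC: "finite (carrier (CC n)) \<and> order (CC n) \<le> 2 ^ bound_exp n"
    by (rule expansion_group_order[OF n CC_expansion])
  moreover have "order (CC n) \<ge> order (GG n)"
    using onto card_image_le CC by (metis order_def)
  ultimately have "f \<in> iso (CC n) (GG n)"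
    using epi_iso_iff_order[OF _ epi] GG_order[OF n] by simp
  then show ?thesis using f by (auto simp: expansion_hom_def iso_def)
qed

lemma GG_universal:
  assumes n: "n \<ge> 1" and G: "expansion_group n G \<phi> g"
  shows "\<exists>f. f \<in> epi (GG n) G \<and> expansion_hom n (GG n) (gamma n) G g f"
proof -
  interpret G: exp2_derived G n g by (rule expansion_group_exp2_derived[OF G])
  obtain f0 where f0: "expansion_hom n (CC n) (cgen n) (GG n) (gamma n) f0" "f0 \<in> iso (CC n) (GG n)"
    using CC_GG_iso[OF n] by blast
  define f0' where "f0' = inv_into (carrier (CC n)) f0"
  have f0': "f0' \<in> hom (GG n) (CC n)"
    using group.iso_set_sym[OF CC_group f0(2)] by (simp add: f0'_def iso_def)
  have "f0' (gamma n i) = cgen n i" if "i \<in> {1..n}" for i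
  proof -
    have "inj_on f0 (carrier (CC n))" using f0(2) by (simp add: iso_def bij_betw_def)
    moreover have "gamma n i = f0 (cgen n i)" using f0(1) that by (simp add: expansion_hom_def)
    ultimately show ?thesis using cgen_carrier[OF that] by (simp add: f0'_def inv_into_f_f)
  qed
  note f0' = f0' this
  obtain F where F: "F \<in> hom (CC n) G" "\<forall>i\<in>{1..n}. F (cgen n i) = g i"
    using G.CC_lift by blast
  have hom: "F \<circ> f0' \<in> hom (GG n) G" by (rule Group.hom_compose[OF f0'(1) F(1)])
  have gens: "\<forall>i\<in>{1..n}. (F \<circ> f0') (gamma n i) = g i" using f0'(2) F(2) by simp
  then have "(F \<circ> f0') ` gamma n ` {1..n} = g ` {1..n}" by (force simp: image_image)
  then have "carrier G \<subseteq> generate G ((F \<circ> f0') ` gamma n ` {1..n})"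
    using expansion_group_generated[OF G] by simp
  moreover have "gamma n ` {1..n} \<subseteq> carrier (GG n)" using gamma_GG by blast
  ultimately have "(F \<circ> f0') ` carrier (GG n) = carrier G"
    using hom_onto_generated[OF GG_group G.is_group hom] by blast
  then have "F \<circ> f0' \<in> epi (GG n) G \<and> expansion_hom n (GG n) (gamma n) G g (F \<circ> f0')"
    using hom gens by (simp add: epi_def expansion_hom_def)
  then show ?thesis by blast
qed

lemma GG_epi_expansion_group:
  assumes n: "n \<ge> 1" and G: "expansion_group n G \<phi> g"
  shows "(\<exists>f. f \<in> epi (GG n) G \<and> expansion_hom n (GG n) (gamma n) G g f
          \<and> (\<forall>f'. f' \<in> epi (GG n) G \<and> expansion_hom n (GG n) (gamma n) G g f'
                   \<longrightarrow> (\<forall>x\<in>carrier (GG n). f' x = f x)))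
      \<and> finite (carrier G) \<and> order G \<le> 2 ^ bound_exp n
      \<and> (\<forall>f. f \<in> epi (GG n) G \<and> expansion_hom n (GG n) (gamma n) G g f
               \<longrightarrow> (order G = 2 ^ bound_exp n \<longleftrightarrow> f \<in> iso (GG n) G))"
proof -
  have "group G" using G by (simp add: expansion_group_def)
  obtain F where F: "F \<in> epi (GG n) G" "expansion_hom n (GG n) (gamma n) G g F"
    using GG_universal[OF n G] by blast
  have "\<forall>x\<in>carrier (GG n). f' x = F x" if "expansion_hom n (GG n) (gamma n) G g f'" for f'
    using expansion_hom_unique[OF GG_group \<open>group G\<close> GG_generated _ that F(2)] gamma_GG by blast
  moreover have "order G = 2 ^ bound_exp n \<longleftrightarrow> f \<in> iso (GG n) G" if "f \<in> epi (GG n) G" for f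
    using epi_iso_iff_order[OF finite_GG that] GG_order[OF n] by simp
  ultimately show ?thesis using F expansion_group_order[OF n G] by blast
qed

theorem theorem3p14:
  fixes n :: nat
  assumes "n \<ge> 1"
  shows "expansion_group n (GG n) (gbold n) (gamma n)
     \<and> expansion_group n (CC n) (cphi n) (cgen n)
     \<and> (\<exists>f. expansion_hom n (CC n) (cgen n) (GG n) (gamma n) f
            \<and> (\<forall>f'. expansion_hom n (CC n) (cgen n) (GG n) (gamma n) f'
                     \<longrightarrow> (\<forall>c\<in>carrier (CC n). f' c = f c))
            \<and> f \<in> iso (CC n) (GG n))
     \<and> (\<forall>(G :: ('a, 'b) monoid_scheme) \<phi> g. expansion_group n G \<phi> g \<longrightarrow>
          (\<exists>f. f \<in> epi (GG n) G \<and> expansion_hom n (GG n) (gamma n) G g f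
               \<and> (\<forall>f'. f' \<in> epi (GG n) G \<and> expansion_hom n (GG n) (gamma n) G g f'
                        \<longrightarrow> (\<forall>x\<in>carrier (GG n). f' x = f x)))
          \<and> finite (carrier G)
          \<and> order G \<le> 2 ^ bound_exp n
          \<and> (\<forall>f. f \<in> epi (GG n) G \<and> expansion_hom n (GG n) (gamma n) G g f
                   \<longrightarrow> (order G = 2 ^ bound_exp n \<longleftrightarrow> f \<in> iso (GG n) G)))"
proof -
  have "carrier (CC n) \<subseteq> generate (CC n) (cgen n ` {1..n})" by (rule CC_generated)
  then have "\<exists>f. expansion_hom n (CC n) (cgen n) (GG n) (gamma n) f
      \<and> (\<forall>f'. expansion_hom n (CC n) (cgen n) (GG n) (gamma n) f' \<longrightarrow> (\<forall>c\<in>carrier (CC n). f' c = f c))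
      \<and> f \<in> iso (CC n) (GG n)"
    using CC_GG_iso[OF assms] expansion_hom_unique[OF CC_group GG_group] cgen_carrier by blast
  then show ?thesis using GG_expansion[OF assms] CC_expansion GG_epi_expansion_group[OF assms] by blast
qed

end
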